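(* Suppose $T\subseteq 2^{<\omega}$ is a perfect tree such that $[T]$ is Turing independent. Then there is a Borel function $h_T\colon(2^\omega)^\omega\to 2^\omega$ such that for every sequence $\bar x=\langle x_n\rangle_{n\in\mathbb N}$ of elements of $[T]$, $h_T(\bar x)$ computes every $x_n$ but does not compute any element of $[T]$ other than the $x_n$'s.
   Context: A tree $T\subseteq 2^{<\omega}$ is perfect if every node of $T$ has two incomparable descendants in $T$; $[T]$ denotes the set of infinite paths through $T$. A set $A\subseteq 2^\omega$ is Turing independent if no finite subset of $A$ computes (via the join $\oplus$) any element of $A$ outside that subset. $(2^\omega)^\omega$ carries the product topology. *)

theory Defs
  imports "HOL-Analysis.Analysis" "HOL-Library.Sublist"
begin

text \<open>Cantor space 2^omega is the type nat => bool; its topology is the product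
of discrete bool (library instance), and (2^omega)^omega is nat => nat => bool
with the product topology (library instance in Function_Topology).\<close>

text \<open>An n-ary function is
represented as a map on nat lists; only its values on lists of length n matter.\<close>

inductive rec_in :: "(nat \<Rightarrow> nat) \<Rightarrow> nat \<Rightarrow> (nat list \<Rightarrow> nat) \<Rightarrow> bool"
  for g :: "nat \<Rightarrow> nat" where
  zero: "rec_in g n (\<lambda>_. 0)"
| succ: "rec_in g 1 (\<lambda>xs. Suc (hd xs))"
| proj: "i < n \<Longrightarrow> rec_in g n (\<lambda>xs. xs ! i)"
| orac: "rec_in g 1 (\<lambda>xs. g (hd xs))"
| comp: "rec_in g m h \<Longrightarrow> length fs = m \<Longrightarrow> (\<forall>f\<in>set fs. rec_in g n f)
          \<Longrightarrow> rec_in g n (\<lambda>xs. h (map (\<lambda>f. f xs) fs))"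
| prim_rec: "rec_in g n b \<Longrightarrow> rec_in g (n + 2) s
          \<Longrightarrow> rec_in g (n + 1) (\<lambda>xs. rec_nat (b (tl xs)) (\<lambda>k r. s (k # r # tl xs)) (hd xs))"
| minim: "rec_in g (n + 1) f \<Longrightarrow> (\<forall>xs. length xs = n \<longrightarrow> (\<exists>y. f (y # xs) = 0))
          \<Longrightarrow> rec_in g n (\<lambda>xs. LEAST y. f (y # xs) = 0)"

definition turing_le :: "(nat \<Rightarrow> bool) \<Rightarrow> (nat \<Rightarrow> bool) \<Rightarrow> bool" where
  "turing_le y x \<longleftrightarrow>
     (\<exists>f. rec_in (\<lambda>n. of_bool (x n)) 1 f \<and> (\<forall>n. f [n] = of_bool (y n)))"

definition join :: "(nat \<Rightarrow> bool) \<Rightarrow> (nat \<Rightarrow> bool) \<Rightarrow> (nat \<Rightarrow> bool)" where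
  "join x y = (\<lambda>n. if even n then x (n div 2) else y (n div 2))"

fun join_list :: "(nat \<Rightarrow> bool) list \<Rightarrow> (nat \<Rightarrow> bool)" where
  "join_list [] = (\<lambda>_. False)"
| "join_list (x # xs) = join x (join_list xs)"

text \<open>Join of a finite set (via some enumeration; the Turing degree does not depend on it).\<close>
definition join_set :: "(nat \<Rightarrow> bool) set \<Rightarrow> (nat \<Rightarrow> bool)" where
  "join_set F = join_list (SOME xs. set xs = F \<and> distinct xs)"

definition turing_independent :: "(nat \<Rightarrow> bool) set \<Rightarrow> bool" where
  "turing_independent A \<longleftrightarrow>
     (\<forall>F. finite F \<and> F \<subseteq> A \<longrightarrow> (\<forall>y \<in> A - F. \<not> turing_le y (join_set F)))"

definition is_tree :: "bool list set \<Rightarrow> bool" where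
  "is_tree T \<longleftrightarrow> (\<forall>s t. t \<in> T \<and> prefix s t \<longrightarrow> s \<in> T)"

definition perfect_tree :: "bool list set \<Rightarrow> bool" where
  "perfect_tree T \<longleftrightarrow> is_tree T \<and>
     (\<forall>\<sigma>\<in>T. \<exists>s\<in>T. \<exists>t\<in>T. prefix \<sigma> s \<and> prefix \<sigma> t \<and> \<not> prefix s t \<and> \<not> prefix t s)"

definition paths :: "bool list set \<Rightarrow> (nat \<Rightarrow> bool) set" where
  "paths T = {x. \<forall>n. map x [0..<n] \<in> T}"

end

theory Submission
  imports Defs
begin

text \<open>
  The function h is a join of the columns X n, each modified on a finite initial segment, built
  by finite extension forcing relative to X. A condition decides the columns n < m completely,
  as a finite stem followed by X n, and finitely many bits of the other columns. For the e-th
  oracle program p we meet a condition that forces one of: p diverges on some input; p computes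
  a string outside T; every string p computes is an initial segment of one of the decided
  columns. If no extension of a condition q forces this, a search through the extensions of q
  computes, from the join of X 0, ..., X (m - 1), a path through T different from all of them,
  contradicting Turing independence; the search is effective because the interpreter of oracle
  programs with partial oracles is itself recursive in the oracle. Each X n is computable from h
  because column n of h differs from X n only on the stem, and h is Borel because each stage of
  the construction depends measurably on X.
\<close>

section \<open>Closure properties of relative recursiveness\<close>

definition rec_fun :: "(nat \<Rightarrow> nat) \<Rightarrow> nat \<Rightarrow> (nat list \<Rightarrow> nat) \<Rightarrow> bool" where
  "rec_fun g n F \<longleftrightarrow> (\<exists>f. rec_in g n f \<and> (\<forall>xs. length xs = n \<longrightarrow> f xs = F xs))"

definition rec_pred :: "(nat \<Rightarrow> nat) \<Rightarrow> nat \<Rightarrow> (nat list \<Rightarrow> bool) \<Rightarrow> bool" where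
  "rec_pred g n P \<longleftrightarrow> rec_fun g n (\<lambda>xs. of_bool (P xs))"

lemma rec_fun_cong: "rec_fun g n F \<Longrightarrow> (\<And>xs. length xs = n \<Longrightarrow> F xs = G xs) \<Longrightarrow> rec_fun g n G"
  unfolding rec_fun_def by metis

lemma rec_fun_list_reps:
  assumes "\<forall>F\<in>set Fs. rec_fun g n F"
  shows "\<exists>fs. length fs = length Fs \<and> (\<forall>f\<in>set fs. rec_in g n f) \<and>
     (\<forall>xs. length xs = n \<longrightarrow> map (\<lambda>f. f xs) fs = map (\<lambda>F. F xs) Fs)"
  using assms
proof (induction Fs)
  case Nil
  then show ?case by auto
next
  case (Cons F Fs)
  then obtain fs where fs: "length fs = length Fs" "\<forall>f\<in>set fs. rec_in g n f"
     "\<forall>xs. length xs = n \<longrightarrow> map (\<lambda>f. f xs) fs = map (\<lambda>F. F xs) Fs" by auto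
  from Cons.prems obtain f where f: "rec_in g n f" "\<forall>xs. length xs = n \<longrightarrow> f xs = F xs"
    unfolding rec_fun_def by auto
  show ?case using fs f by (intro exI[of _ "f # fs"]) auto
qed

lemma rec_fun_comp:
  assumes "rec_fun g m H" "length Fs = m" "\<forall>F\<in>set Fs. rec_fun g n F"
  shows "rec_fun g n (\<lambda>xs. H (map (\<lambda>F. F xs) Fs))"
proof -
  obtain h where h: "rec_in g m h" "\<forall>xs. length xs = m \<longrightarrow> h xs = H xs"
    using assms(1) unfolding rec_fun_def by auto
  obtain fs where fs: "length fs = length Fs" "\<forall>f\<in>set fs. rec_in g n f"
     "\<forall>xs. length xs = n \<longrightarrow> map (\<lambda>f. f xs) fs = map (\<lambda>F. F xs) Fs"
    using rec_fun_list_reps[OF assms(3)] by auto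
  have "rec_in g n (\<lambda>xs. h (map (\<lambda>f. f xs) fs))"
    by (rule rec_in.comp[OF h(1)]) (use fs assms(2) in auto)
  moreover have "\<forall>xs. length xs = n \<longrightarrow> h (map (\<lambda>f. f xs) fs) = H (map (\<lambda>F. F xs) Fs)"
    using fs h assms(2) by auto
  ultimately show ?thesis unfolding rec_fun_def by blast
qed

lemma rec_fun_comp1:
  assumes "rec_fun g 1 H" "rec_fun g n A"
  shows "rec_fun g n (\<lambda>xs. H [A xs])"
  using rec_fun_comp[OF assms(1), of "[A]"] assms(2) by auto

lemma rec_fun_comp2:
  assumes "rec_fun g 2 H" "rec_fun g n A" "rec_fun g n B"
  shows "rec_fun g n (\<lambda>xs. H [A xs, B xs])"
  using rec_fun_comp[OF assms(1), of "[A, B]"] assms(2,3) by auto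

lemma rec_fun_comp3:
  assumes "rec_fun g 3 H" "rec_fun g n A" "rec_fun g n B" "rec_fun g n C"
  shows "rec_fun g n (\<lambda>xs. H [A xs, B xs, C xs])"
  using rec_fun_comp[OF assms(1), of "[A, B, C]"] assms(2-4) by auto

lemma rec_fun_comp4:
  assumes "rec_fun g 4 H" "rec_fun g n A" "rec_fun g n B" "rec_fun g n C" "rec_fun g n D"
  shows "rec_fun g n (\<lambda>xs. H [A xs, B xs, C xs, D xs])"
  using rec_fun_comp[OF assms(1), of "[A, B, C, D]"] assms(2-5) by auto

lemma rec_fun_lift1:
  assumes "rec_fun g 1 (\<lambda>xs. f (xs ! 0))" "rec_fun g n A"
  shows "rec_fun g n (\<lambda>xs. f (A xs))"
  using rec_fun_comp1[OF assms] by simp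

lemma rec_fun_lift2:
  assumes "rec_fun g 2 (\<lambda>xs. f (xs ! 0) (xs ! 1))" "rec_fun g n A" "rec_fun g n B"
  shows "rec_fun g n (\<lambda>xs. f (A xs) (B xs))"
  using rec_fun_comp2[OF assms] by simp

lemma map_nth_upt_drop: "length ys = n \<Longrightarrow> map (\<lambda>i. ys ! i) [k..<n] = drop k ys"
  by (rule nth_equalityI) auto

lemma rec_fun_zero: "rec_fun g n (\<lambda>_. 0)"
  unfolding rec_fun_def by (auto intro: rec_in.zero)

lemma rec_fun_proj: "i < n \<Longrightarrow> rec_fun g n (\<lambda>xs. xs ! i)"
  unfolding rec_fun_def by (auto intro: rec_in.proj)

lemma rec_fun_Suc:
  assumes "rec_fun g n A"
  shows "rec_fun g n (\<lambda>xs. Suc (A xs))"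
proof -
  have "rec_fun g 1 (\<lambda>xs. Suc (hd xs))"
    unfolding rec_fun_def using rec_in.succ by blast
  from rec_fun_comp1[OF this assms] show ?thesis by simp
qed

lemma rec_fun_oracle:
  assumes "rec_fun g n A"
  shows "rec_fun g n (\<lambda>xs. g (A xs))"
proof -
  have "rec_fun g 1 (\<lambda>xs. g (hd xs))"
    unfolding rec_fun_def using rec_in.orac by blast
  from rec_fun_comp1[OF this assms] show ?thesis by simp
qed

lemma rec_fun_const: "rec_fun g n (\<lambda>_. c)"
  by (induction c) (auto intro: rec_fun_zero rec_fun_Suc)

lemma rec_fun_drop:
  assumes "rec_fun g n A"
  shows "rec_fun g (k + n) (\<lambda>ys. A (drop k ys))"
proof -
  have "rec_fun g (k + n) (\<lambda>ys. A (map (\<lambda>F. F ys) (map (\<lambda>i ys. ys ! i) [k..<k+n])))"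
    by (rule rec_fun_comp[OF assms]) (auto intro: rec_fun_proj)
  then show ?thesis
    by (rule rec_fun_cong) (auto intro!: arg_cong[where f=A] nth_equalityI)
qed

lemma rec_fun_drop2: "rec_fun g n A \<Longrightarrow> rec_fun g (Suc (Suc n)) (\<lambda>ys. A (drop 2 ys))"
  using rec_fun_drop[of g n A 2] by simp

lemma rec_fun_rec_nat:
  assumes B: "rec_fun g n B" and S: "rec_fun g (Suc (Suc n)) S" and X: "rec_fun g n X"
  shows "rec_fun g n (\<lambda>xs. rec_nat (B xs) (\<lambda>k r. S (k # r # xs)) (X xs))"
proof -
  obtain b where b: "rec_in g n b" "\<forall>xs. length xs = n \<longrightarrow> b xs = B xs"
    using B unfolding rec_fun_def by auto
  obtain s where s: "rec_in g (n + 2) s" "\<forall>xs. length xs = n + 2 \<longrightarrow> s xs = S xs"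
    using S unfolding rec_fun_def by auto
  have "rec_in g (n + 1) (\<lambda>xs. rec_nat (b (tl xs)) (\<lambda>k r. s (k # r # tl xs)) (hd xs))"
    by (rule rec_in.prim_rec[OF b(1) s(1)])
  moreover have "\<forall>xs. length xs = n + 1 \<longrightarrow>
     rec_nat (b (tl xs)) (\<lambda>k r. s (k # r # tl xs)) (hd xs) =
     rec_nat (B (tl xs)) (\<lambda>k r. S (k # r # tl xs)) (hd xs)"
    using b s by auto
  ultimately have P: "rec_fun g (n + 1) (\<lambda>xs. rec_nat (B (tl xs)) (\<lambda>k r. S (k # r # tl xs)) (hd xs))"
    unfolding rec_fun_def by blast
  have "rec_fun g n (\<lambda>xs. (\<lambda>ys. rec_nat (B (tl ys)) (\<lambda>k r. S (k # r # tl ys)) (hd ys))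
            (map (\<lambda>F. F xs) (X # map (\<lambda>i ys. ys ! i) [0..<n])))"
    by (rule rec_fun_comp[OF P]) (auto intro: rec_fun_proj X)
  then show ?thesis
    by (rule rec_fun_cong) (simp add: map_nth_upt_drop[where k=0] comp_def)
qed

lemma rec_fun_Least:
  assumes F: "rec_fun g (Suc n) F" and reg: "\<And>xs. length xs = n \<Longrightarrow> \<exists>y. F (y # xs) = 0"
  shows "rec_fun g n (\<lambda>xs. LEAST y. F (y # xs) = 0)"
proof -
  obtain f where f: "rec_in g (n+1) f" "\<forall>xs. length xs = n + 1 \<longrightarrow> f xs = F xs"
    using F unfolding rec_fun_def by auto
  have "rec_in g n (\<lambda>xs. LEAST y. f (y # xs) = 0)"
    by (rule rec_in.minim[OF f(1)]) (use f reg in auto)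
  moreover have "\<forall>xs. length xs = n \<longrightarrow> (LEAST y. f (y # xs) = 0) = (LEAST y. F (y # xs) = 0)"
    using f by auto
  ultimately show ?thesis unfolding rec_fun_def by blast
qed

lemma rec_fun_add: "rec_fun g n A \<Longrightarrow> rec_fun g n B \<Longrightarrow> rec_fun g n (\<lambda>xs. A xs + B xs)"
proof -
  assume A: "rec_fun g n A" and B: "rec_fun g n B"
  have "rec_fun g n (\<lambda>xs. rec_nat (A xs) (\<lambda>k r. (\<lambda>ys. Suc (ys ! 1)) (k # r # xs)) (B xs))"
    by (rule rec_fun_rec_nat[OF A _ B]) (auto intro: rec_fun_Suc rec_fun_proj)
  moreover have "rec_nat a (\<lambda>k r. Suc r) b = a + b" for a b :: nat by (induction b) auto
  ultimately show ?thesis by (simp add: add.commute)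
qed

lemma rec_fun_mult: "rec_fun g n A \<Longrightarrow> rec_fun g n B \<Longrightarrow> rec_fun g n (\<lambda>xs. A xs * B xs)"
proof -
  assume A: "rec_fun g n A" and B: "rec_fun g n B"
  have "rec_fun g n (\<lambda>xs. rec_nat 0 (\<lambda>k r. (\<lambda>ys. ys ! 1 + A (drop 2 ys)) (k # r # xs)) (B xs))"
    by (rule rec_fun_rec_nat[OF rec_fun_const _ B]) (auto intro!: rec_fun_add rec_fun_proj rec_fun_drop2 A)
  moreover have "rec_nat 0 (\<lambda>k r. r + a) b = a * b" for a b :: nat by (induction b) auto
  ultimately show ?thesis by simp
qed

lemma rec_fun_pred: "rec_fun g n A \<Longrightarrow> rec_fun g n (\<lambda>xs. A xs - 1)"
proof -
  assume A: "rec_fun g n A"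
  have "rec_fun g n (\<lambda>xs. rec_nat 0 (\<lambda>k r. (\<lambda>ys. ys ! 0) (k # r # xs)) (A xs))"
    by (rule rec_fun_rec_nat[OF rec_fun_const _ A]) (auto intro: rec_fun_proj)
  moreover have "rec_nat 0 (\<lambda>k r. k) b = b - 1" for b :: nat by (induction b) auto
  ultimately show ?thesis by simp
qed

lemma rec_fun_diff: "rec_fun g n A \<Longrightarrow> rec_fun g n B \<Longrightarrow> rec_fun g n (\<lambda>xs. A xs - B xs)"
proof -
  assume A: "rec_fun g n A" and B: "rec_fun g n B"
  have "rec_fun g n (\<lambda>xs. rec_nat (A xs) (\<lambda>k r. (\<lambda>ys. ys ! 1 - 1) (k # r # xs)) (B xs))"
    by (rule rec_fun_rec_nat[OF A _ B]) (rule rec_fun_pred, rule rec_fun_proj, simp)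
  moreover have "rec_nat a (\<lambda>k r. r - 1) b = a - b" for a b :: nat by (induction b) auto
  ultimately show ?thesis by simp
qed

lemma rec_fun_if_zero:
  "rec_fun g n C \<Longrightarrow> rec_fun g n A \<Longrightarrow> rec_fun g n B \<Longrightarrow> rec_fun g n (\<lambda>xs. if C xs = 0 then A xs else B xs)"
proof -
  assume A: "rec_fun g n A" and B: "rec_fun g n B" and C: "rec_fun g n C"
  have "rec_fun g n (\<lambda>xs. rec_nat (A xs) (\<lambda>k r. (\<lambda>ys. B (drop 2 ys)) (k # r # xs)) (C xs))"
    by (rule rec_fun_rec_nat[OF A _ C]) (auto intro: rec_fun_drop2 B)
  moreover have "rec_nat a (\<lambda>k r. b) c = (if c = 0 then a else b)" for a b c :: nat by (cases c) auto
  ultimately show ?thesis by simp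
qed

lemma rec_fun_if:
  "rec_pred g n P \<Longrightarrow> rec_fun g n A \<Longrightarrow> rec_fun g n B \<Longrightarrow> rec_fun g n (\<lambda>xs. if P xs then A xs else B xs)"
  unfolding rec_pred_def by (rule rec_fun_cong[OF rec_fun_if_zero[of g n _ B A]]) auto

lemma rec_fun_of_bool: "rec_pred g n P \<Longrightarrow> rec_fun g n (\<lambda>xs. of_bool (P xs))"
  unfolding rec_pred_def .

lemma rec_pred_cong: "rec_pred g n P \<Longrightarrow> (\<And>xs. length xs = n \<Longrightarrow> P xs = Q xs) \<Longrightarrow> rec_pred g n Q"
  unfolding rec_pred_def by (rule rec_fun_cong[of g n "\<lambda>xs. of_bool (P xs)"]) auto

lemma rec_pred_const: "rec_pred g n (\<lambda>_. b)"
  unfolding rec_pred_def by (rule rec_fun_const)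

lemma rec_pred_le: "rec_fun g n A \<Longrightarrow> rec_fun g n B \<Longrightarrow> rec_pred g n (\<lambda>xs. A xs \<le> B xs)"
  unfolding rec_pred_def
  by (rule rec_fun_cong[OF rec_fun_if_zero[OF rec_fun_diff, of g n A B "\<lambda>_. 1" "\<lambda>_. 0"]])
     (auto intro: rec_fun_const)

lemma rec_pred_less: "rec_fun g n A \<Longrightarrow> rec_fun g n B \<Longrightarrow> rec_pred g n (\<lambda>xs. A xs < B xs)"
  using rec_pred_le[of g n "\<lambda>xs. Suc (A xs)" B] by (auto intro: rec_fun_Suc simp: Suc_le_eq)

lemma rec_pred_not: "rec_pred g n P \<Longrightarrow> rec_pred g n (\<lambda>xs. \<not> P xs)"
  unfolding rec_pred_def
  by (rule rec_fun_cong[OF rec_fun_if_zero[of g n _ "\<lambda>_. 1" "\<lambda>_. 0"]]) (auto intro: rec_fun_const)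

lemma rec_pred_conj: "rec_pred g n P \<Longrightarrow> rec_pred g n Q \<Longrightarrow> rec_pred g n (\<lambda>xs. P xs \<and> Q xs)"
  unfolding rec_pred_def
  by (rule rec_fun_cong[OF rec_fun_mult[of g n "\<lambda>xs. of_bool (P xs)" "\<lambda>xs. of_bool (Q xs)"]]) auto

lemma rec_pred_disj: "rec_pred g n P \<Longrightarrow> rec_pred g n Q \<Longrightarrow> rec_pred g n (\<lambda>xs. P xs \<or> Q xs)"
  using rec_pred_not[of g n "\<lambda>xs. \<not> P xs \<and> \<not> Q xs"] rec_pred_conj[OF rec_pred_not rec_pred_not] by auto

lemma rec_pred_eq: "rec_fun g n A \<Longrightarrow> rec_fun g n B \<Longrightarrow> rec_pred g n (\<lambda>xs. A xs = B xs)"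
  by (rule rec_pred_cong[OF rec_pred_conj[OF rec_pred_le rec_pred_le, of g n A B B A]]) auto

lemma rec_pred_nonzero: "rec_fun g n A \<Longrightarrow> rec_pred g n (\<lambda>xs. A xs \<noteq> 0)"
  by (intro rec_pred_not rec_pred_eq rec_fun_const)

lemma rec_pred_list_ex: "\<forall>F\<in>set Fs. rec_fun g n F \<Longrightarrow> rec_pred g n (\<lambda>ys. \<exists>F\<in>set Fs. F ys = 0)"
proof (induction Fs)
  case Nil
  then show ?case by (auto intro: rec_pred_cong[OF rec_pred_const[of g n False]])
next
  case (Cons F Fs)
  have "rec_pred g n (\<lambda>ys. F ys = 0 \<or> (\<exists>F\<in>set Fs. F ys = 0))"
    using Cons by (intro rec_pred_disj rec_pred_eq rec_fun_const) auto
  then show ?case by (rule rec_pred_cong) auto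
qed

lemma rec_fun_Least_pred:
  assumes P: "rec_pred g (Suc n) P" and reg: "\<And>xs. length xs = n \<Longrightarrow> \<exists>y. P (y # xs)"
  shows "rec_fun g n (\<lambda>xs. LEAST y. P (y # xs))"
proof -
  have "rec_fun g n (\<lambda>xs. LEAST y. (\<lambda>ys. if P ys then 0 else 1::nat) (y # xs) = 0)"
    by (rule rec_fun_Least[of g n "\<lambda>ys. if P ys then 0 else 1"])
       (use reg in \<open>auto intro!: rec_fun_if P rec_fun_const\<close>)
  then show ?thesis by (simp add: if_split_eq1 cong: if_cong)
qed

text \<open>The disjunct a \<le> q keeps the search regular when b = 0.\<close>

lemma Least_eq_div: "(b::nat) > 0 \<Longrightarrow> (LEAST q. a < b * (q + 1) \<or> a \<le> q) = a div b"
proof (rule Least_equality)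
  assume "b > 0"
  show "a < b * (a div b + 1) \<or> a \<le> a div b"
  proof -
    have "a = b * (a div b) + a mod b" by simp
    moreover have "a mod b < b" using \<open>b > 0\<close> by simp
    ultimately have "a < b * (a div b) + b" by linarith
    then show ?thesis by (simp add: algebra_simps)
  qed
  fix y assume "a < b * (y + 1) \<or> a \<le> y"
  then show "a div b \<le> y"
  proof
    assume "a < b * (y + 1)"
    then show ?thesis using \<open>b > 0\<close>
      by (metis Suc_eq_plus1 div_less_iff_less_mult less_Suc_eq_le mult.commute)
  next
    assume "a \<le> y" then show ?thesis by (meson div_le_dividend le_trans)
  qed
qed

lemma rec_fun_div_proj: "rec_fun g 2 (\<lambda>xs. xs ! 0 div xs ! 1)"
proof -
  define P where "P ys \<longleftrightarrow> ys ! 1 < ys ! 2 * (ys ! 0 + 1) \<or> ys ! 1 \<le> ys ! 0" for ys :: "nat list"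
  have "rec_pred g (Suc 2) P"
    unfolding P_def
    by (intro rec_pred_disj rec_pred_less rec_pred_le rec_fun_mult rec_fun_add rec_fun_proj rec_fun_const) auto
  then have "rec_fun g 2 (\<lambda>xs. LEAST q. P (q # xs))"
    by (rule rec_fun_Least_pred) (auto simp: P_def intro: exI[of _ "xs ! 0" for xs])
  then have "rec_fun g 2 (\<lambda>xs. if xs ! 1 = 0 then 0 else LEAST q. P (q # xs))"
    by (intro rec_fun_if rec_pred_eq rec_fun_proj rec_fun_const) auto
  then show ?thesis
    by (rule rec_fun_cong) (use Least_eq_div in \<open>auto simp: P_def\<close>)
qed

lemma rec_fun_div: "rec_fun g n A \<Longrightarrow> rec_fun g n B \<Longrightarrow> rec_fun g n (\<lambda>xs. A xs div B xs)"
  by (rule rec_fun_lift2[OF rec_fun_div_proj])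

lemma rec_fun_mod: "rec_fun g n A \<Longrightarrow> rec_fun g n B \<Longrightarrow> rec_fun g n (\<lambda>xs. A xs mod B xs)"
proof -
  assume A: "rec_fun g n A" and B: "rec_fun g n B"
  have "rec_fun g n (\<lambda>xs. A xs - B xs * (A xs div B xs))"
    by (intro rec_fun_diff rec_fun_mult rec_fun_div A B)
  then show ?thesis by (rule rec_fun_cong) (simp add: minus_div_mult_eq_mod[symmetric] mult.commute)
qed

lemma rec_fun_pow2: "rec_fun g n A \<Longrightarrow> rec_fun g n (\<lambda>xs. 2 ^ A xs)"
proof -
  assume A: "rec_fun g n A"
  have "rec_fun g n (\<lambda>xs. rec_nat 1 (\<lambda>k r. (\<lambda>ys. ys ! 1 + ys ! 1) (k # r # xs)) (A xs))"
    by (rule rec_fun_rec_nat[OF rec_fun_const _ A]) (auto intro!: rec_fun_add rec_fun_proj)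
  moreover have "rec_nat 1 (\<lambda>k r. r + r) b = (2::nat) ^ b" for b by (induction b) auto
  ultimately show ?thesis by simp
qed

section \<open>A pairing function matching the join\<close>

text \<open>Position npair n k of join_list Xs holds bit k of Xs ! n.\<close>

definition npair :: "nat \<Rightarrow> nat \<Rightarrow> nat" where
  "npair n k = 2 ^ n * (2 * k + 1) - 1"

definition nfst :: "nat \<Rightarrow> nat" where
  "nfst i = (LEAST n. (Suc i) mod 2 ^ (Suc n) \<noteq> 0)"

definition nsnd :: "nat \<Rightarrow> nat" where
  "nsnd i = (Suc i div 2 ^ nfst i - 1) div 2"

lemma Suc_npair: "Suc (npair n k) = 2 ^ n * (2 * k + 1)"
  unfolding npair_def by simp

lemma Suc_mod_pow2_Suc_neq0: "(Suc i) mod 2 ^ (Suc i) \<noteq> 0"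
proof -
  have "Suc i < 2 ^ Suc i" by (metis less_exp)
  then show ?thesis by simp
qed

lemma nfst_le: "nfst i \<le> i"
  unfolding nfst_def by (rule Least_le) (rule Suc_mod_pow2_Suc_neq0)

lemma pow2_dvd_pow2_mult_odd_iff: "odd (m::nat) \<Longrightarrow> 2 ^ j dvd 2 ^ n * m \<longleftrightarrow> j \<le> n"
proof
  assume o: "odd m" and d: "2 ^ j dvd 2 ^ n * m"
  show "j \<le> n"
  proof (rule ccontr)
    assume "\<not> j \<le> n"
    then have "(2::nat) ^ Suc n dvd 2 ^ j" by (intro le_imp_power_dvd) simp
    then have "2 ^ Suc n dvd 2 ^ n * m" using d dvd_trans by blast
    then have "2 dvd m" by simp
    with o show False by simp
  qed
next
  assume "j \<le> n" then show "2 ^ j dvd 2 ^ n * m" by (simp add: le_imp_power_dvd)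
qed

lemma nfst_npair: "nfst (npair n k) = n"
  unfolding nfst_def Suc_npair
proof (rule Least_equality)
  show "2 ^ n * (2 * k + 1) mod 2 ^ Suc n \<noteq> 0"
    using pow2_dvd_pow2_mult_odd_iff[of "2*k+1" "Suc n" n] by (simp add: dvd_eq_mod_eq_0)
  fix y assume "2 ^ n * (2 * k + 1) mod 2 ^ Suc y \<noteq> 0"
  then show "n \<le> y"
    using pow2_dvd_pow2_mult_odd_iff[of "2*k+1" "Suc y" n] by (auto simp: dvd_eq_mod_eq_0)
qed

lemma nsnd_npair: "nsnd (npair n k) = k"
  unfolding nsnd_def nfst_npair Suc_npair by simp

lemma Suc_eq_pow2_mult_odd: "\<exists>n m. Suc i = 2 ^ n * m \<and> odd m"
proof (induction i rule: less_induct)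
  case (less i)
  show ?case
  proof (cases "odd (Suc i)")
    case True then show ?thesis by (intro exI[of _ 0] exI[of _ "Suc i"]) auto
  next
    case False
    then obtain j where j: "Suc i = 2 * Suc j" 
      by (metis dvd_def even_Suc nat.exhaust mult_0_right nat.distinct(1))
    then have "j < i" by simp
    with less obtain n m where "Suc j = 2 ^ n * m" "odd m" by blast
    then show ?thesis using j by (intro exI[of _ "Suc n"] exI[of _ m]) auto
  qed
qed

lemma npair_nfst_nsnd: "npair (nfst i) (nsnd i) = i"
proof -
  obtain n m where nm: "Suc i = 2 ^ n * m" "odd m" using Suc_eq_pow2_mult_odd by blast
  then obtain k where k: "m = 2 * k + 1" by (metis oddE)
  then have "i = npair n k" using nm unfolding npair_def by simp
  then show ?thesis by (simp add: nfst_npair nsnd_npair)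
qed

lemma nsnd_le: "nsnd i \<le> i"
proof -
  have "nsnd i \<le> Suc i div 2 ^ nfst i - 1" unfolding nsnd_def by (rule div_le_dividend)
  moreover have "Suc i div 2 ^ nfst i \<le> Suc i" by (rule div_le_dividend)
  ultimately show ?thesis by linarith
qed

lemma npair_ge_snd: "k \<le> npair n k"
proof -
  have "1 * (2 * k + 1) \<le> 2 ^ n * (2 * k + 1)" by (intro mult_le_mono1) simp
  then show ?thesis unfolding npair_def by simp
qed

lemma npair_ge_fst: "n \<le> npair n k"
proof -
  have "n < 2 ^ n" by simp
  also have "2 ^ n \<le> 2 ^ n * (2 * k + 1)" by simp
  finally show ?thesis unfolding npair_def by simp
qed

lemma npair_strict_mono_snd: "k < k' \<Longrightarrow> npair n k < npair n k'"
proof -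
  assume "k < k'"
  then have "2 ^ n * (2 * k + 1) < 2 ^ n * (2 * k' + 1)" by (intro mult_less_mono2) auto
  then have "Suc (npair n k) < Suc (npair n k')" unfolding Suc_npair .
  then show ?thesis by simp
qed

lemma npair_0: "npair 0 k = 2 * k" unfolding npair_def by simp

lemma npair_Suc: "npair (Suc a) k = 2 * npair a k + 1"
proof -
  have "1 * 1 \<le> 2 ^ a * (2 * k + 1)" by (intro mult_le_mono) auto
  then show ?thesis unfolding npair_def by (simp add: algebra_simps)
qed

lemma join_list_npair: "a < length Ls \<Longrightarrow> join_list Ls (npair a k) = (Ls ! a) k"
proof (induction Ls arbitrary: a)
  case Nil then show ?case by simp
next
  case (Cons x Ls)
  show ?case
  proof (cases a)
    case 0 then show ?thesis by (simp add: join_def npair_0)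
  next
    case (Suc a')
    then show ?thesis using Cons by (simp add: join_def npair_Suc)
  qed
qed

lemma join_set_npair:
  assumes "finite F" "x \<in> F"
  shows "\<exists>a. \<forall>k. join_set F (npair a k) = x k"
proof -
  define Ls where "Ls = (SOME xs. set xs = F \<and> distinct xs)"
  have "set Ls = F"
    unfolding Ls_def using someI_ex[OF finite_distinct_list[OF assms(1)]] by blast
  then obtain a where "a < length Ls" "Ls ! a = x"
    using assms(2) by (auto simp: in_set_conv_nth)
  then have "join_set F (npair a k) = x k" for k
    unfolding join_set_def Ls_def[symmetric] by (simp add: join_list_npair)
  then show ?thesis by blast
qed

lemma rec_fun_npair: "rec_fun g n A \<Longrightarrow> rec_fun g n B \<Longrightarrow> rec_fun g n (\<lambda>xs. npair (A xs) (B xs))"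
  unfolding npair_def by (intro rec_fun_diff rec_fun_mult rec_fun_pow2 rec_fun_add rec_fun_const) auto

lemma rec_fun_nfst: "rec_fun g n A \<Longrightarrow> rec_fun g n (\<lambda>xs. nfst (A xs))"
proof -
  have "rec_fun g 1 (\<lambda>xs. LEAST m. (\<lambda>ys. (Suc (ys ! 1)) mod 2 ^ (Suc (ys ! 0)) \<noteq> 0) (m # xs))"
  proof (rule rec_fun_Least_pred)
    show "rec_pred g (Suc 1) (\<lambda>ys. (Suc (ys ! 1)) mod 2 ^ (Suc (ys ! 0)) \<noteq> 0)"
      by (intro rec_pred_nonzero rec_fun_mod rec_fun_Suc rec_fun_pow2 rec_fun_proj) auto
    fix xs :: "nat list"
    show "\<exists>y. Suc ((y # xs) ! 1) mod 2 ^ Suc ((y # xs) ! 0) \<noteq> 0"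
      using Suc_mod_pow2_Suc_neq0[of "xs ! 0"] by (intro exI[of _ "xs ! 0"]) simp
  qed
  then have "rec_fun g 1 (\<lambda>xs. nfst (xs ! 0))" unfolding nfst_def by simp
  then show "rec_fun g n A \<Longrightarrow> rec_fun g n (\<lambda>xs. nfst (A xs))" by (rule rec_fun_lift1)
qed

lemma rec_fun_nsnd: "rec_fun g n A \<Longrightarrow> rec_fun g n (\<lambda>xs. nsnd (A xs))"
  unfolding nsnd_def by (intro rec_fun_div rec_fun_diff rec_fun_Suc rec_fun_pow2 rec_fun_nfst rec_fun_const)

lemma rec_pred_odd_div: "rec_fun g n A \<Longrightarrow> rec_fun g n B \<Longrightarrow> rec_pred g n (\<lambda>xs. odd (A xs div 2 ^ B xs))"
proof -
  assume A: "rec_fun g n A" and B: "rec_fun g n B"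
  have "rec_pred g n (\<lambda>xs. A xs div 2 ^ B xs mod 2 = 1)"
    by (intro rec_pred_eq rec_fun_mod rec_fun_div rec_fun_pow2 rec_fun_const A B)
  then show ?thesis by (rule rec_pred_cong) (auto simp: odd_iff_mod_2_eq_one)
qed

lemma rec_fun_finite_support: 
  assumes "finite {x. f x \<noteq> 0}" "rec_fun g n A"
  shows "rec_fun g n (\<lambda>xs. f (A xs))"
proof -
  have "\<forall>f. {x. f x \<noteq> 0} \<subseteq> S \<longrightarrow> rec_fun g n (\<lambda>xs. f (A xs))" if "finite S" for S
    using that
  proof (induction S rule: finite_induct)
    case empty
    then show ?case by (auto intro: rec_fun_cong[OF rec_fun_const[of g n 0]])
  next
    case (insert a S)
    show ?case
    proof (intro allI impI)
      fix f :: "nat \<Rightarrow> nat" assume f: "{x. f x \<noteq> 0} \<subseteq> insert a S"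
      have "{x. (f(a := 0)) x \<noteq> 0} \<subseteq> S" using f by auto
      then have "rec_fun g n (\<lambda>xs. (f(a := 0)) (A xs))"
        using insert.IH by blast
      then have "rec_fun g n (\<lambda>xs. (if A xs = a then f a else 0) + (f(a := 0)) (A xs))"
        by (intro rec_fun_add rec_fun_if rec_pred_eq rec_fun_const assms(2))
      then show "rec_fun g n (\<lambda>xs. f (A xs))" by (rule rec_fun_cong) auto
    qed
  qed
  then show ?thesis using assms(1) by blast
qed

lemma rec_fun_finite_support2:
  assumes "finite {(a, b). f a b \<noteq> 0}" "rec_fun g n A" "rec_fun g n B"
  shows "rec_fun g n (\<lambda>xs. f (A xs) (B xs))"
proof -
  let ?F = "\<lambda>j. f (nfst j) (nsnd j)"
  have "{j. ?F j \<noteq> 0} \<subseteq> (\<lambda>(a, b). npair a b) ` {(a, b). f a b \<noteq> 0}"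
  proof
    fix j assume "j \<in> {j. ?F j \<noteq> 0}"
    then show "j \<in> (\<lambda>(a, b). npair a b) ` {(a, b). f a b \<noteq> 0}"
      by (intro image_eqI[of _ _ "(nfst j, nsnd j)"]) (auto simp: npair_nfst_nsnd)
  qed
  then have fin: "finite {j. ?F j \<noteq> 0}" using assms(1) finite_subset by blast
  have "rec_fun g n (\<lambda>xs. ?F (npair (A xs) (B xs)))" by (rule rec_fun_finite_support[OF fin rec_fun_npair[OF assms(2,3)]])
  then show ?thesis by (simp add: nfst_npair nsnd_npair)
qed


section \<open>Oracle programs with partial oracles\<close>

datatype prog = Zero | Succ | Proj nat | Orac | Comp prog "prog list" | PRec prog prog | Min prog

text \<open>
  The state of an unbounded search is 1 while searching, 0 after an undefined value, and t + 2
  once the value at t is 0.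
\<close>

definition search_step :: "nat \<Rightarrow> nat \<Rightarrow> nat option \<Rightarrow> nat" where
  "search_step st t e = (if st = 1 then (case e of None \<Rightarrow> 0 | Some 0 \<Rightarrow> t + 2 | Some _ \<Rightarrow> 1) else st)"

definition search_result :: "nat \<Rightarrow> nat option" where
  "search_result st = (if 2 \<le> st then Some (st - 2) else None)"

definition search_state :: "(nat \<Rightarrow> nat option) \<Rightarrow> nat \<Rightarrow> nat" where
  "search_state E j = rec_nat 1 (\<lambda>t st. search_step st t (E t)) j"

text \<open>
  run Q s p xs runs p on xs with the partial oracle Q (None: bit not known) and fuel s, which
  bounds every unbounded search; the result None means divergence within the fuel or a query
  outside the domain of Q.
\<close>

fun run :: "(nat \<Rightarrow> nat option) \<Rightarrow> nat \<Rightarrow> prog \<Rightarrow> nat list \<Rightarrow> nat option" where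
  "run Q s Zero xs = Some 0"
| "run Q s Succ xs = Some (Suc (hd xs))"
| "run Q s (Proj i) xs = Some (xs ! i)"
| "run Q s Orac xs = Q (hd xs)"
| "run Q s (Comp h fs) xs = (if None \<in> set (map (\<lambda>f. run Q s f xs) fs) then None
      else run Q s h (map (\<lambda>f. the (run Q s f xs)) fs))"
| "run Q s (PRec b t) xs = rec_nat (run Q s b (tl xs))
      (\<lambda>k r. case r of None \<Rightarrow> None | Some v \<Rightarrow> run Q s t (k # v # tl xs)) (hd xs)"
| "run Q s (Min f) xs = search_result (search_state (\<lambda>t. run Q s f (t # xs)) s)"

lemma search_state_0 [simp]: "search_state E 0 = 1"
  unfolding search_state_def by simp

lemma search_state_Suc: "search_state E (Suc j) = search_step (search_state E j) j (E j)"
  unfolding search_state_def by simp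

definition is_pos :: "nat option \<Rightarrow> bool" where
  "is_pos e \<longleftrightarrow> (\<exists>v. e = Some (Suc v))"

lemma search_state_char:
  "(search_state E j = 1 \<longleftrightarrow> (\<forall>t<j. is_pos (E t))) \<and>
   (\<forall>y. search_state E j = y + 2 \<longleftrightarrow> (y < j \<and> E y = Some 0 \<and> (\<forall>t<y. is_pos (E t))))"
proof (induction j)
  case 0
  then show ?case by auto
next
  case (Suc j)
  show ?case
  proof (cases "search_state E j = 1")
    case True
    then have all: "\<forall>t<j. is_pos (E t)" using Suc by simp
    have notfound: "\<forall>y. \<not> (y < j \<and> E y = Some 0)" using all by (auto simp: is_pos_def)
    show ?thesis
    proof (cases "E j")
      case None
      then show ?thesis using True all notfound
        by (auto simp: search_state_Suc search_step_def is_pos_def less_Suc_eq)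
    next
      case (Some a)
      then show ?thesis using True all notfound
        by (cases a) (auto simp: search_state_Suc search_step_def is_pos_def less_Suc_eq)
    qed
  next
    case False
    then have "\<not> (\<forall>t<j. is_pos (E t))" using Suc by simp
    then show ?thesis using False Suc
      by (auto simp: search_state_Suc search_step_def less_Suc_eq)
  qed
qed

lemma run_Min_eq_Some:
  "run Q s (Min f) xs = Some y \<longleftrightarrow>
     (y < s \<and> run Q s f (y # xs) = Some 0 \<and> (\<forall>t<y. is_pos (run Q s f (t # xs))))"
proof -
  have "run Q s (Min f) xs = Some y \<longleftrightarrow> search_state (\<lambda>t. run Q s f (t # xs)) s = y + 2"
    by (auto simp: search_result_def)
  then show ?thesis using search_state_char by simp
qed

lemma run_Comp_eq_Some:
  "run Q s (Comp h fs) xs = Some v \<longleftrightarrow>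
     (\<exists>vs. list_all2 (\<lambda>f w. run Q s f xs = Some w) fs vs \<and> run Q s h vs = Some v)"
proof
  assume r: "run Q s (Comp h fs) xs = Some v"
  then have nn: "None \<notin> set (map (\<lambda>f. run Q s f xs) fs)"
    by (rule contrapos_pn) simp
  with r have "run Q s h (map (\<lambda>f. the (run Q s f xs)) fs) = Some v" by simp
  moreover have "list_all2 (\<lambda>f w. run Q s f xs = Some w) fs (map (\<lambda>f. the (run Q s f xs)) fs)"
    unfolding list.rel_map list_all2_same using nn by (metis image_eqI option.collapse set_map)
  ultimately show "\<exists>vs. list_all2 (\<lambda>f w. run Q s f xs = Some w) fs vs \<and> run Q s h vs = Some v"
    by blast
next
  assume "\<exists>vs. list_all2 (\<lambda>f w. run Q s f xs = Some w) fs vs \<and> run Q s h vs = Some v"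
  then obtain vs where vs: "list_all2 (\<lambda>f w. run Q s f xs = Some w) fs vs" "run Q s h vs = Some v"
    by blast
  have "map (\<lambda>f. the (run Q s f xs)) fs = vs"
    by (rule nth_equalityI) (use vs(1) in \<open>auto simp: list_all2_conv_all_nth\<close>)
  moreover have "None \<notin> set (map (\<lambda>f. run Q s f xs) fs)"
    using vs(1) by (auto simp: list_all2_conv_all_nth in_set_conv_nth)
  ultimately show "run Q s (Comp h fs) xs = Some v" using vs(2) by simp
qed

lemma run_mono:
  "run Q s p xs = Some v \<Longrightarrow> Q \<subseteq>\<^sub>m Q' \<Longrightarrow> s \<le> s' \<Longrightarrow> run Q' s' p xs = Some v"
proof (induction p arbitrary: xs v)
  case Orac then show ?case by (auto simp: map_le_def dom_def)
next
  case (Comp h fs)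
  from Comp.prems(1) obtain vs
    where vs: "list_all2 (\<lambda>f w. run Q s f xs = Some w) fs vs" "run Q s h vs = Some v"
    unfolding run_Comp_eq_Some by blast
  from vs(1) have "list_all2 (\<lambda>f w. run Q' s' f xs = Some w) fs vs"
    by (rule list.rel_mono_strong) (use Comp.IH(2) Comp.prems(2,3) in blast)
  moreover have "run Q' s' h vs = Some v" using vs(2) Comp.IH(1) Comp.prems(2,3) by blast
  ultimately show ?case unfolding run_Comp_eq_Some by blast
next
  case (PRec b t)
  let ?R = "\<lambda>Q s k. rec_nat (run Q s b (tl xs))
      (\<lambda>k r. case r of None \<Rightarrow> None | Some v \<Rightarrow> run Q s t (k # v # tl xs)) k"
  have "\<And>w. ?R Q s k = Some w \<Longrightarrow> ?R Q' s' k = Some w" for k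
  proof (induction k)
    case 0 then show ?case using PRec.IH(1) PRec.prems(2,3) by simp
  next
    case (Suc k)
    then obtain u where u: "?R Q s k = Some u" by (cases "?R Q s k") auto
    with Suc show ?case using PRec.IH(2) PRec.prems(2,3) by simp
  qed
  then show ?case using PRec.prems(1) by simp
next
  case (Min f)
  have y: "v < s" "run Q s f (v # xs) = Some 0" "\<forall>t<v. is_pos (run Q s f (t # xs))"
    using Min.prems(1) unfolding run_Min_eq_Some by simp_all
  have "run Q' s' f (v # xs) = Some 0" using y Min.IH Min.prems by blast
  moreover have "\<forall>t<v. is_pos (run Q' s' f (t # xs))"
    using y(3) Min.IH Min.prems(2,3) unfolding is_pos_def by blast
  ultimately show ?case using y(1) Min.prems(3) unfolding run_Min_eq_Some by simp
qed simp_all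

lemma run_det: "run Q s p xs = Some a \<Longrightarrow> run Q' s' p xs = Some b \<Longrightarrow> Q \<subseteq>\<^sub>m Q' \<Longrightarrow> a = b"
  using run_mono[of Q s p xs a Q' "max s s'"] run_mono[of Q' s' p xs b Q' "max s s'"] by simp

lemma eventually_list_all2:
  "list_all2 (\<lambda>x y. eventually (P x y) F) xs ys \<Longrightarrow> eventually (\<lambda>N. list_all2 (\<lambda>x y. P x y N) xs ys) F"
  by (induction rule: list_all2_induct) (auto intro: eventually_conj)

lemma run_finite_use:
  "run Q s p xs = Some v \<Longrightarrow> eventually (\<lambda>N. run (Q |` {..<N}) s p xs = Some v) sequentially"
proof (induction p arbitrary: xs v)
  case Orac
  then show ?case by (intro eventually_mono[OF eventually_gt_at_top[of "hd xs"]]) simp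
next
  case (Comp h fs)
  from Comp.prems(1) obtain vs
    where vs: "list_all2 (\<lambda>f w. run Q s f xs = Some w) fs vs" "run Q s h vs = Some v"
    unfolding run_Comp_eq_Some by blast
  from vs(1) have "list_all2 (\<lambda>f w. eventually (\<lambda>N. run (Q |` {..<N}) s f xs = Some w) sequentially) fs vs"
    by (rule list.rel_mono_strong) (use Comp.IH(2) in blast)
  then have "eventually (\<lambda>N. list_all2 (\<lambda>f w. run (Q |` {..<N}) s f xs = Some w) fs vs) sequentially"
    by (rule eventually_list_all2)
  moreover have "eventually (\<lambda>N. run (Q |` {..<N}) s h vs = Some v) sequentially"
    using vs(2) Comp.IH(1) by blast
  ultimately have "eventually (\<lambda>N. list_all2 (\<lambda>f w. run (Q |` {..<N}) s f xs = Some w) fs vs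
      \<and> run (Q |` {..<N}) s h vs = Some v) sequentially"
    by (rule eventually_conj)
  then show ?case by (rule eventually_mono) (unfold run_Comp_eq_Some, blast)
next
  case (PRec b t)
  let ?R = "\<lambda>Q k. rec_nat (run Q s b (tl xs))
      (\<lambda>k r. case r of None \<Rightarrow> None | Some v \<Rightarrow> run Q s t (k # v # tl xs)) k"
  have "\<And>w. ?R Q k = Some w \<Longrightarrow> eventually (\<lambda>N. ?R (Q |` {..<N}) k = Some w) sequentially" for k
  proof (induction k)
    case 0 then show ?case using PRec.IH(1) by simp
  next
    case (Suc k)
    then obtain u where u: "?R Q k = Some u" "run Q s t (k # u # tl xs) = Some w"
      by (cases "?R Q k") auto
    then have "eventually (\<lambda>N. ?R (Q |` {..<N}) k = Some u \<and>
        run (Q |` {..<N}) s t (k # u # tl xs) = Some w) sequentially"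
      using Suc.IH PRec.IH(2) by (simp add: eventually_conj_iff)
    then show ?case by (auto elim: eventually_mono)
  qed
  then show ?case using PRec.prems by simp
next
  case (Min f)
  have y: "v < s" "run Q s f (v # xs) = Some 0" "\<forall>t<v. is_pos (run Q s f (t # xs))"
    using Min.prems unfolding run_Min_eq_Some by simp_all
  have "\<forall>t\<in>{..v}. eventually (\<lambda>N. run (Q |` {..<N}) s f (t # xs) = run Q s f (t # xs)) sequentially"
  proof
    fix t assume "t \<in> {..v}"
    then obtain w where "run Q s f (t # xs) = Some w" using y by (auto simp: is_pos_def le_less)
    then show "eventually (\<lambda>N. run (Q |` {..<N}) s f (t # xs) = run Q s f (t # xs)) sequentially"
      using Min.IH by simp
  qed
  then have "eventually (\<lambda>N. \<forall>t\<in>{..v}. run (Q |` {..<N}) s f (t # xs) = run Q s f (t # xs)) sequentially"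
    by (rule eventually_ball_finite[OF finite_atMost])
  then show ?case
  proof (rule eventually_mono)
    fix N assume "\<forall>t\<in>{..v}. run (Q |` {..<N}) s f (t # xs) = run Q s f (t # xs)"
    then show "run (Q |` {..<N}) s (Min f) xs = Some v" using y unfolding run_Min_eq_Some by simp
  qed
qed simp_all

definition computes :: "(nat \<Rightarrow> nat) \<Rightarrow> nat \<Rightarrow> (nat list \<Rightarrow> nat) \<Rightarrow> prog \<Rightarrow> bool" where
  "computes g n f p \<longleftrightarrow>
     (\<forall>xs. length xs = n \<longrightarrow> eventually (\<lambda>s. run (\<lambda>i. Some (g i)) s p xs = Some (f xs)) sequentially)"

lemma computes_Comp:
  assumes h: "computes g m h ph" and len: "length fs = m" and fs: "\<forall>f\<in>set fs. computes g n f (P f)"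
  shows "computes g n (\<lambda>xs. h (map (\<lambda>f. f xs) fs)) (Comp ph (map P fs))"
  unfolding computes_def
proof (intro allI impI)
  fix xs :: "nat list" assume "length xs = n"
  let ?Q = "\<lambda>i. Some (g i)"
  have "list_all2 (\<lambda>p w. eventually (\<lambda>s. run ?Q s p xs = Some w) sequentially) (map P fs) (map (\<lambda>f. f xs) fs)"
    using fs \<open>length xs = n\<close> unfolding computes_def by (simp add: list.rel_map list_all2_same)
  then have "eventually (\<lambda>s. list_all2 (\<lambda>p w. run ?Q s p xs = Some w) (map P fs) (map (\<lambda>f. f xs) fs)) sequentially"
    by (rule eventually_list_all2)
  moreover have "eventually (\<lambda>s. run ?Q s ph (map (\<lambda>f. f xs) fs) = Some (h (map (\<lambda>f. f xs) fs))) sequentially"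
    using h len unfolding computes_def by simp
  ultimately have "eventually (\<lambda>s. list_all2 (\<lambda>p w. run ?Q s p xs = Some w) (map P fs) (map (\<lambda>f. f xs) fs)
      \<and> run ?Q s ph (map (\<lambda>f. f xs) fs) = Some (h (map (\<lambda>f. f xs) fs))) sequentially"
    by (rule eventually_conj)
  then show "eventually (\<lambda>s. run (\<lambda>i. Some (g i)) s (Comp ph (map P fs)) xs
      = Some (h (map (\<lambda>f. f xs) fs))) sequentially"
    by (rule eventually_mono) (subst run_Comp_eq_Some, blast)
qed

lemma computes_PRec:
  assumes b: "computes g n b pb" and t: "computes g (n + 2) t pt"
  shows "computes g (n + 1) (\<lambda>xs. rec_nat (b (tl xs)) (\<lambda>k r. t (k # r # tl xs)) (hd xs)) (PRec pb pt)"
  unfolding computes_def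
proof (intro allI impI)
  fix xs :: "nat list" assume len: "length xs = n + 1"
  let ?Q = "\<lambda>i. Some (g i)"
  let ?R = "\<lambda>s k. rec_nat (run ?Q s pb (tl xs))
    (\<lambda>k r. case r of None \<Rightarrow> None | Some v \<Rightarrow> run ?Q s pt (k # v # tl xs)) k"
  have "eventually (\<lambda>s. ?R s k = Some (rec_nat (b (tl xs)) (\<lambda>k r. t (k # r # tl xs)) k)) sequentially" for k
  proof (induction k)
    case 0
    then show ?case using b len unfolding computes_def by simp
  next
    case (Suc k)
    let ?v = "rec_nat (b (tl xs)) (\<lambda>k r. t (k # r # tl xs)) k"
    have "eventually (\<lambda>s. run ?Q s pt (k # ?v # tl xs) = Some (t (k # ?v # tl xs))) sequentially"
      using t len unfolding computes_def by simp
    with Suc.IH have "eventually (\<lambda>s. ?R s k = Some ?v \<and>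
        run ?Q s pt (k # ?v # tl xs) = Some (t (k # ?v # tl xs))) sequentially"
      by (rule eventually_conj)
    then show ?case by (rule eventually_mono) simp
  qed
  then show "eventually (\<lambda>s. run ?Q s (PRec pb pt) xs
      = Some (rec_nat (b (tl xs)) (\<lambda>k r. t (k # r # tl xs)) (hd xs))) sequentially"
    by simp
qed

lemma computes_Min:
  assumes f: "computes g (n + 1) f pf" and reg: "\<forall>xs. length xs = n \<longrightarrow> (\<exists>y. f (y # xs) = 0)"
  shows "computes g n (\<lambda>xs. LEAST y. f (y # xs) = 0) (Min pf)"
  unfolding computes_def
proof (intro allI impI)
  fix xs :: "nat list" assume len: "length xs = n"
  let ?Q = "\<lambda>i. Some (g i)"
  define y where "y = (LEAST y. f (y # xs) = 0)"
  obtain y0 where "f (y0 # xs) = 0" using reg len by blast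
  then have fy: "f (y # xs) = 0" unfolding y_def by (rule LeastI)
  have fl: "f (t # xs) \<noteq> 0" if "t < y" for t using that not_less_Least unfolding y_def by blast
  have "eventually (\<lambda>s. \<forall>t\<in>{..y}. run ?Q s pf (t # xs) = Some (f (t # xs))) sequentially"
    using f len unfolding computes_def by (intro eventually_ball_finite) simp_all
  with eventually_gt_at_top
  have "eventually (\<lambda>s. y < s \<and> (\<forall>t\<in>{..y}. run ?Q s pf (t # xs) = Some (f (t # xs)))) sequentially"
    by (rule eventually_conj)
  then have "eventually (\<lambda>s. run ?Q s (Min pf) xs = Some y) sequentially"
  proof (rule eventually_mono)
    fix s assume s: "y < s \<and> (\<forall>t\<in>{..y}. run ?Q s pf (t # xs) = Some (f (t # xs)))"
    have "is_pos (run ?Q s pf (t # xs))" if "t < y" for t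
      using s fl[OF that] that by (auto simp: is_pos_def gr0_conv_Suc)
    then show "run ?Q s (Min pf) xs = Some y" unfolding run_Min_eq_Some using s fy by simp
  qed
  then show "eventually (\<lambda>s. run ?Q s (Min pf) xs = Some (LEAST y. f (y # xs) = 0)) sequentially"
    unfolding y_def .
qed

lemma rec_in_prog: "rec_in g n f \<Longrightarrow> \<exists>p. computes g n f p"
proof (induction rule: rec_in.induct)
  case (zero n)
  then show ?case by (intro exI[of _ Zero]) (simp add: computes_def)
next
  case succ
  then show ?case by (intro exI[of _ Succ]) (simp add: computes_def)
next
  case (proj i n)
  then show ?case by (intro exI[of _ "Proj i"]) (simp add: computes_def)
next
  case orac
  then show ?case by (intro exI[of _ Orac]) (simp add: computes_def)
next
  case (comp m h fs n)
  have "\<forall>f\<in>set fs. \<exists>p. computes g n f p" using comp.IH(2) by blast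
  then obtain P where "\<forall>f\<in>set fs. computes g n f (P f)" by (blast dest: bchoice)
  with comp show ?case by (blast intro: computes_Comp)
next
  case (prim_rec n b t)
  then show ?case by (blast intro: computes_PRec)
next
  case (minim n f)
  then show ?case by (blast intro: computes_Min)
qed

section \<open>The interpreter is recursive in the oracle\<close>

definition ocode :: "nat option \<Rightarrow> nat" where
  "ocode e = (case e of None \<Rightarrow> 0 | Some v \<Rightarrow> Suc v)"

lemma ocode_simps[simp]: "ocode None = 0" "ocode (Some v) = Suc v"
  by (auto simp: ocode_def)

lemma ocode_eq_0_iff: "ocode e = 0 \<longleftrightarrow> e = None"
  by (cases e) auto

text \<open>
  A projection beyond the length of the input yields the unspecified value [] ! (i - n), which
  the interpreter must reproduce for Proj i on short inputs.
\<close>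

lemma nth_beyond: "length xs = n \<Longrightarrow> n \<le> i \<Longrightarrow> xs ! i = [] ! (i - n)"
proof (induction xs arbitrary: i n)
  case Nil then show ?case by simp
next
  case (Cons a xs)
  then show ?case by (cases i) auto
qed

lemma rec_fun_nth_drop3: "rec_fun g (n + 3) (\<lambda>ys. drop 3 ys ! i)"
proof (cases "i < n")
  case True
  have "rec_fun g (n + 3) (\<lambda>ys. ys ! (i + 3))" by (rule rec_fun_proj) (use True in simp)
  then show ?thesis by (rule rec_fun_cong) (simp add: add.commute)
next
  case False
  show ?thesis
  proof (rule rec_fun_cong[OF rec_fun_const[of g "n+3" "[] ! (i - n)"]])
    fix ys :: "nat list" assume "length ys = n + 3"
    then have "length (drop 3 ys) = n" by simp
    then show "[] ! (i - n) = drop 3 ys ! i" using nth_beyond[of "drop 3 ys" n i] False by simp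
  qed
qed

lemma rec_fun_hd_drop3: "rec_fun g (n + 3) (\<lambda>ys. hd (drop 3 ys))"
proof (cases n)
  case 0
  show ?thesis by (rule rec_fun_cong[OF rec_fun_const[of g "n+3" "hd []"]]) (use 0 in auto)
next
  case (Suc m)
  have "rec_fun g (n + 3) (\<lambda>ys. ys ! 3)" by (rule rec_fun_proj) (use Suc in simp)
  then show ?thesis by (rule rec_fun_cong) (simp add: hd_drop_conv_nth Suc)
qed

lemma ocode_rec_nat:
  "ocode (rec_nat A (\<lambda>k r. case r of None \<Rightarrow> None | Some v \<Rightarrow> Fn k v) x) =
   rec_nat (ocode A) (\<lambda>k R. if R = 0 then 0 else ocode (Fn k (R - 1))) x"
proof (induction x)
  case 0 then show ?case by simp
next
  case (Suc x)
  define r where "r = rec_nat A (\<lambda>k r. case r of None \<Rightarrow> None | Some v \<Rightarrow> Fn k v) x"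
  have IH: "ocode r = rec_nat (ocode A) (\<lambda>k R. if R = 0 then 0 else ocode (Fn k (R - 1))) x"
    using Suc.IH unfolding r_def .
  have L: "rec_nat A (\<lambda>k r. case r of None \<Rightarrow> None | Some v \<Rightarrow> Fn k v) (Suc x) =
     (case r of None \<Rightarrow> None | Some v \<Rightarrow> Fn x v)" unfolding r_def by simp
  have R: "rec_nat (ocode A) (\<lambda>k R. if R = 0 then 0 else ocode (Fn k (R - 1))) (Suc x) =
     (if ocode r = 0 then 0 else ocode (Fn x (ocode r - 1)))" unfolding IH by simp
  show ?case unfolding L R by (cases r) auto
qed

lemma search_step_ocode:
  "search_step st t e = (if st = 1 then (if ocode e = 0 then 0 else if ocode e = 1 then t + 2 else 1) else st)"
  unfolding search_step_def by (cases e) (auto split: nat.splits)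

lemma ocode_search_result: "ocode (search_result st) = (if 2 \<le> st then st - 1 else 0)"
  unfolding search_result_def by auto

text \<open>
  The first three arguments of run_code \<Omega> are the fuel and two parameters selecting the partial
  oracle \<Omega> a b; the value 0 encodes the undefined result.
\<close>

definition run_code :: "(nat \<Rightarrow> nat \<Rightarrow> nat \<Rightarrow> nat option) \<Rightarrow> prog \<Rightarrow> nat list \<Rightarrow> nat" where
  "run_code \<Omega> p ys = ocode (run (\<Omega> (ys ! 1) (ys ! 2)) (ys ! 0) p (drop 3 ys))"

lemma run_code_append3: "run_code \<Omega> p ([a, b, c] @ M) = ocode (run (\<Omega> b c) a p M)"
  unfolding run_code_def by simp

lemma run_code_Cons3: "run_code \<Omega> p (a # b # c # M) = ocode (run (\<Omega> b c) a p M)"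
  unfolding run_code_def by simp

lemma the_eq_ocode: "e \<noteq> None \<Longrightarrow> the e = ocode e - 1"
  by (cases e) auto

lemma rec_fun_app_drop:
  assumes "rec_fun g (length Fs + (n - k)) F" "\<forall>G\<in>set Fs. rec_fun g n G"
  shows "rec_fun g n (\<lambda>ys. F (map (\<lambda>G. G ys) Fs @ drop k ys))"
proof -
  have "rec_fun g n (\<lambda>ys. F (map (\<lambda>G. G ys) (Fs @ map (\<lambda>i ys. ys ! i) [k..<n])))"
    by (rule rec_fun_comp[OF assms(1)]) (use assms(2) in \<open>auto intro: rec_fun_proj\<close>)
  then show ?thesis by (rule rec_fun_cong) (simp add: map_nth_upt_drop comp_def)
qed

lemma rec_fun_run_code_Comp:
  assumes h: "rec_fun g (length fs + 3) (run_code \<Omega> h)"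
    and fs: "\<forall>f\<in>set fs. rec_fun g (n + 3) (run_code \<Omega> f)"
  shows "rec_fun g (n + 3) (run_code \<Omega> (Comp h fs))"
proof -
  let ?Fs = "map (\<lambda>f ys. run_code \<Omega> f ys) fs"
  let ?Gs = "[\<lambda>ys. ys ! 0, \<lambda>ys. ys ! 1, \<lambda>ys. ys ! 2] @ map (\<lambda>f ys. run_code \<Omega> f ys - 1) fs"
  have "rec_pred g (n + 3) (\<lambda>ys. \<exists>F\<in>set ?Fs. F ys = 0)"
    using fs by (intro rec_pred_list_ex) auto
  moreover have "rec_fun g (n + 3) (\<lambda>ys. run_code \<Omega> h (map (\<lambda>F. F ys) ?Gs))"
    by (rule rec_fun_comp[OF h]) (use fs in \<open>auto intro: rec_fun_proj rec_fun_pred[unfolded One_nat_def]\<close>)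
  ultimately have "rec_fun g (n + 3)
      (\<lambda>ys. if \<exists>F\<in>set ?Fs. F ys = 0 then 0 else run_code \<Omega> h (map (\<lambda>F. F ys) ?Gs))"
    by (intro rec_fun_if rec_fun_const)
  then show ?thesis
  proof (rule rec_fun_cong)
    fix ys :: "nat list"
    let ?Q = "\<Omega> (ys ! 1) (ys ! 2)" and ?s = "ys ! 0" and ?xs = "drop 3 ys"
    have iff: "(\<exists>F\<in>set ?Fs. F ys = 0) \<longleftrightarrow> None \<in> set (map (\<lambda>f. run ?Q ?s f ?xs) fs)"
      by (auto simp: run_code_def ocode_eq_0_iff image_iff) (metis, metis)
    show "(if \<exists>F\<in>set ?Fs. F ys = 0 then 0 else run_code \<Omega> h (map (\<lambda>F. F ys) ?Gs))
        = run_code \<Omega> (Comp h fs) ys"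
    proof (cases "None \<in> set (map (\<lambda>f. run ?Q ?s f ?xs) fs)")
      case True
      then show ?thesis using iff by (simp add: run_code_def)
    next
      case False
      then have "run ?Q ?s f ?xs \<noteq> None" if "f \<in> set fs" for f
        using that by force
      then have "map (\<lambda>f. the (run ?Q ?s f ?xs)) fs = map (\<lambda>f. run_code \<Omega> f ys - 1) fs"
        by (intro map_cong refl) (simp add: run_code_def the_eq_ocode)
      moreover have "map (\<lambda>F. F ys) ?Gs = [ys ! 0, ys ! 1, ys ! 2] @ map (\<lambda>f. run_code \<Omega> f ys - 1) fs"
        by simp
      moreover have "run_code \<Omega> (Comp h fs) ys = ocode (run ?Q ?s h (map (\<lambda>f. the (run ?Q ?s f ?xs)) fs))"
        using False unfolding run_code_def by (simp only: run.simps if_False)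
      ultimately show ?thesis using False iff by (simp only: run_code_append3 if_False)
    qed
  qed
qed

lemma rec_fun_run_code_PRec:
  assumes b: "rec_fun g (n - 1 + 3) (run_code \<Omega> b)"
    and t: "rec_fun g (n - 1 + 2 + 3) (run_code \<Omega> t)"
  shows "rec_fun g (n + 3) (run_code \<Omega> (PRec b t))"
proof -
  define B where "B ys = run_code \<Omega> b ([ys ! 0, ys ! 1, ys ! 2] @ drop 4 ys)" for ys
  define S where "S zs = (if zs ! 1 = 0 then 0
    else run_code \<Omega> t ([zs ! 2, zs ! 3, zs ! 4, zs ! 0, zs ! 1 - 1] @ drop 6 zs))" for zs
  have "rec_fun g (n + 3)
      (\<lambda>ys. run_code \<Omega> b (map (\<lambda>G. G ys) [\<lambda>ys. ys ! 0, \<lambda>ys. ys ! 1, \<lambda>ys. ys ! 2] @ drop 4 ys))"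
    by (rule rec_fun_app_drop) (use b in \<open>auto intro: rec_fun_proj simp: numeral_eq_Suc\<close>)
  then have "rec_fun g (n + 3) B" unfolding B_def by simp
  moreover have "rec_fun g (Suc (Suc (n + 3))) (\<lambda>zs. run_code \<Omega> t (map (\<lambda>G. G zs)
      [\<lambda>zs. zs ! 2, \<lambda>zs. zs ! 3, \<lambda>zs. zs ! 4, \<lambda>zs. zs ! 0, \<lambda>zs. zs ! 1 - 1] @ drop 6 zs))"
    by (rule rec_fun_app_drop)
       (use t in \<open>auto intro: rec_fun_proj rec_fun_pred[unfolded One_nat_def] simp: numeral_eq_Suc\<close>)
  then have "rec_fun g (Suc (Suc (n + 3))) S"
    unfolding S_def by (intro rec_fun_if rec_pred_eq rec_fun_proj rec_fun_const) auto
  ultimately have "rec_fun g (n + 3) (\<lambda>ys. rec_nat (B ys) (\<lambda>k r. S (k # r # ys)) (hd (drop 3 ys)))"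
    by (rule rec_fun_rec_nat[OF _ _ rec_fun_hd_drop3])
  then show ?thesis
  proof (rule rec_fun_cong)
    fix ys :: "nat list"
    let ?Q = "\<Omega> (ys ! 1) (ys ! 2)" and ?s = "ys ! 0" and ?xs = "drop 3 ys"
    have "B ys = ocode (run ?Q ?s b (tl ?xs))"
      unfolding B_def run_code_def by (simp add: tl_drop flip: drop_Suc)
    moreover have "S (k # r # ys) = (if r = 0 then 0 else ocode (run ?Q ?s t (k # (r - 1) # tl ?xs)))" for k r
      unfolding S_def by (simp add: run_code_Cons3 tl_drop flip: drop_Suc)
    ultimately show "rec_nat (B ys) (\<lambda>k r. S (k # r # ys)) (hd ?xs) = run_code \<Omega> (PRec b t) ys"
      unfolding run_code_def by (simp add: ocode_rec_nat del: One_nat_def)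
  qed
qed

lemma rec_fun_run_code_Min:
  assumes f: "rec_fun g (n + 1 + 3) (run_code \<Omega> f)"
  shows "rec_fun g (n + 3) (run_code \<Omega> (Min f))"
proof -
  define C where "C zs = run_code \<Omega> f ([zs ! 2, zs ! 3, zs ! 4, zs ! 0] @ drop 5 zs)" for zs
  define S where "S zs = (if zs ! 1 = 1 then (if C zs = 0 then 0 else if C zs = 1 then zs ! 0 + 2 else 1)
    else zs ! 1)" for zs
  have "rec_fun g (Suc (Suc (n + 3))) (\<lambda>zs. run_code \<Omega> f (map (\<lambda>G. G zs)
      [\<lambda>zs. zs ! 2, \<lambda>zs. zs ! 3, \<lambda>zs. zs ! 4, \<lambda>zs. zs ! 0] @ drop 5 zs))"
    by (rule rec_fun_app_drop) (use f in \<open>auto intro: rec_fun_proj simp: numeral_eq_Suc\<close>)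
  then have "rec_fun g (Suc (Suc (n + 3))) C" unfolding C_def by simp
  then have "rec_fun g (Suc (Suc (n + 3))) S"
    unfolding S_def by (intro rec_fun_if rec_pred_eq rec_fun_proj rec_fun_const rec_fun_add) auto
  then have "rec_fun g (n + 3) (\<lambda>ys. rec_nat 1 (\<lambda>k r. S (k # r # ys)) (ys ! 0))"
    by (rule rec_fun_rec_nat[OF rec_fun_const _ rec_fun_proj]) simp
  then have "rec_fun g (n + 3) (\<lambda>ys. if 2 \<le> rec_nat 1 (\<lambda>k r. S (k # r # ys)) (ys ! 0)
      then rec_nat 1 (\<lambda>k r. S (k # r # ys)) (ys ! 0) - 1 else 0)"
    by (intro rec_fun_if rec_pred_le rec_fun_const rec_fun_pred)
  then show ?thesis
  proof (rule rec_fun_cong)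
    fix ys :: "nat list"
    let ?Q = "\<Omega> (ys ! 1) (ys ! 2)" and ?s = "ys ! 0" and ?xs = "drop 3 ys"
    have "C (k # r # ys) = ocode (run ?Q ?s f (k # ?xs))" for k r
      unfolding C_def by (simp add: run_code_Cons3 tl_drop flip: drop_Suc)
    then have "(\<lambda>k r. S (k # r # ys)) = (\<lambda>t st. search_step st t (run ?Q ?s f (t # ?xs)))"
      by (intro ext) (simp only: S_def search_step_ocode, simp)
    then show "(if 2 \<le> rec_nat 1 (\<lambda>k r. S (k # r # ys)) (ys ! 0)
      then rec_nat 1 (\<lambda>k r. S (k # r # ys)) (ys ! 0) - 1 else 0) = run_code \<Omega> (Min f) ys"
      unfolding run_code_def by (simp add: search_state_def ocode_search_result)
  qed
qed

lemma rec_fun_run_code: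
  assumes "rec_fun g 3 (\<lambda>ys. ocode (\<Omega> (ys ! 0) (ys ! 1) (ys ! 2)))"
  shows "rec_fun g (n + 3) (run_code \<Omega> p)"
proof (induction p arbitrary: n)
  case Zero
  show ?case by (rule rec_fun_cong[OF rec_fun_const[of g "n + 3" 1]]) (simp add: run_code_def)
next
  case Succ
  show ?case
    by (rule rec_fun_cong[OF rec_fun_Suc[OF rec_fun_Suc[OF rec_fun_hd_drop3]]]) (simp add: run_code_def)
next
  case (Proj i)
  show ?case
    by (rule rec_fun_cong[OF rec_fun_Suc[OF rec_fun_nth_drop3[of g n i]]]) (simp add: run_code_def)
next
  case Orac
  have "rec_fun g (n + 3) (\<lambda>ys. (\<lambda>zs. ocode (\<Omega> (zs ! 0) (zs ! 1) (zs ! 2))) [ys ! 1, ys ! 2, hd (drop 3 ys)])"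
    by (rule rec_fun_comp3[OF assms]) (auto intro: rec_fun_proj rec_fun_hd_drop3)
  then show ?case by (rule rec_fun_cong) (simp add: run_code_def)
next
  case (Comp h fs)
  then show ?case by (intro rec_fun_run_code_Comp) auto
next
  case (PRec b t)
  then show ?case by (intro rec_fun_run_code_PRec)
next
  case (Min f)
  then show ?case by (intro rec_fun_run_code_Min)
qed

section \<open>Forcing conditions\<close>

text \<open>
  Bit npair n k of h is bit k of column n. A condition (m, \<tau>, \<sigma>) decides every column n < m:
  it agrees with \<tau> ! n below the length of \<tau> ! n and with X n elsewhere. Column n \<ge> m begins
  with pending q n.
\<close>

type_synonym cond = "nat \<times> bool list list \<times> bool list list"

definition width :: "cond \<Rightarrow> nat" where "width q = fst q"
definition stems :: "cond \<Rightarrow> bool list list" where "stems q = fst (snd q)"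
definition pending :: "cond \<Rightarrow> nat \<Rightarrow> bool list" where
  "pending q n = (if n < length (snd (snd q)) then snd (snd q) ! n else [])"

definition cond_oracle :: "cond \<Rightarrow> (nat \<Rightarrow> nat \<Rightarrow> bool) \<Rightarrow> nat \<Rightarrow> nat option" where
  "cond_oracle q X i = (if nfst i < width q then
      Some (of_bool (if nsnd i < length (stems q ! nfst i) then stems q ! nfst i ! nsnd i else X (nfst i) (nsnd i)))
    else if nsnd i < length (pending q (nfst i)) then Some (of_bool (pending q (nfst i) ! nsnd i)) else None)"

lemma cond_oracle_npair: "cond_oracle q X (npair n k) = (if n < width q then
      Some (of_bool (if k < length (stems q ! n) then stems q ! n ! k else X n k))
    else if k < length (pending q n) then Some (of_bool (pending q n ! k)) else None)"
  unfolding cond_oracle_def by (simp add: nfst_npair nsnd_npair)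

lemma cond_oracle_bit: "cond_oracle q X i = Some v \<Longrightarrow> v = 0 \<or> v = 1"
  unfolding cond_oracle_def by (auto split: if_splits)

definition cond_ext :: "cond \<Rightarrow> cond \<Rightarrow> bool" where
  "cond_ext q q' \<longleftrightarrow> width q' = width q \<and> stems q' = stems q \<and>
     (\<forall>n\<ge>width q. prefix (pending q n) (pending q' n))"

lemma cond_ext_refl: "cond_ext q q" unfolding cond_ext_def by auto

lemma cond_ext_trans: "cond_ext q q' \<Longrightarrow> cond_ext q' q'' \<Longrightarrow> cond_ext q q''"
  unfolding cond_ext_def by (metis prefix_order.order_trans)

lemma cond_oracle_mono: "cond_ext q q' \<Longrightarrow> cond_oracle q X \<subseteq>\<^sub>m cond_oracle q' X"
proof (unfold map_le_def, intro ballI)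
  fix i assume s: "cond_ext q q'" and i: "i \<in> dom (cond_oracle q X)"
  show "cond_oracle q X i = cond_oracle q' X i"
  proof (cases "nfst i < width q")
    case True then show ?thesis using s unfolding cond_oracle_def cond_ext_def by simp
  next
    case False
    then have "nsnd i < length (pending q (nfst i))" using i unfolding cond_oracle_def by (auto split: if_splits)
    moreover obtain zs where "pending q' (nfst i) = pending q (nfst i) @ zs"
      using s False unfolding cond_ext_def prefix_def by (meson not_le)
    ultimately show ?thesis using False s unfolding cond_oracle_def cond_ext_def
      by (auto simp: nth_append)
  qed
qed

text \<open>
  Undecided positions below L are read off the binary expansion of c. By fill_realized every such
  oracle belongs to an extension, so numbers can stand for extensions in a search.
\<close>

definition fill :: "cond \<Rightarrow> (nat \<Rightarrow> nat \<Rightarrow> bool) \<Rightarrow> nat \<Rightarrow> nat \<Rightarrow> nat \<Rightarrow> nat option" where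
  "fill q X c L i = (case cond_oracle q X i of
     Some b \<Rightarrow> Some b
   | None \<Rightarrow> if i < L then Some (of_bool (bit c i)) else None)"

lemma fill_0: "fill q X c 0 = cond_oracle q X"
  unfolding fill_def by (auto split: option.splits)

lemma mod_pow2_eq_iff_bits: "(c::nat) mod 2 ^ L = c' mod 2 ^ L \<longleftrightarrow> (\<forall>i<L. bit c i = bit c' i)"
  unfolding take_bit_eq_mod[symmetric] bit_eq_iff by (auto simp: bit_take_bit_iff)

lemma fill_mono: "L \<le> L' \<Longrightarrow> c mod 2 ^ L = c' mod 2 ^ L \<Longrightarrow> fill q X c L \<subseteq>\<^sub>m fill q X c' L'"
  unfolding fill_def map_le_def mod_pow2_eq_iff_bits by (auto split: option.splits if_splits)

lemma ex_nat_bits: "\<exists>c::nat. \<forall>i<L. bit c i = B i"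
  by (intro exI[of _ "horner_sum of_bool 2 (map B [0..<L])"]) (simp add: bit_horner_sum_bit_iff)

definition rows_below :: "nat \<Rightarrow> nat \<Rightarrow> nat" where
  "rows_below L n = (LEAST k. L \<le> npair n k)"

lemma rows_below_iff: "k < rows_below L n \<longleftrightarrow> npair n k < L"
proof
  assume "k < rows_below L n"
  then show "npair n k < L" unfolding rows_below_def using not_less_Least by (metis not_le)
next
  assume a: "npair n k < L"
  have ex: "L \<le> npair n L" by (rule npair_ge_snd)
  show "k < rows_below L n"
  proof (rule ccontr)
    assume "\<not> k < rows_below L n"
    then have "rows_below L n \<le> k" by simp
    moreover have "L \<le> npair n (rows_below L n)" unfolding rows_below_def by (rule LeastI[of _ L]) (rule ex)
    ultimately have "L \<le> npair n k" using npair_strict_mono_snd by (metis le_less le_trans)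
    with a show False by simp
  qed
qed

definition fill_pending :: "cond \<Rightarrow> nat \<Rightarrow> nat \<Rightarrow> bool list list" where
  "fill_pending q c L = map (\<lambda>n. if n < width q then pending q n
       else pending q n @ map (\<lambda>k. bit c (npair n k)) [length (pending q n) ..< rows_below L n])
     [0..<max (length (snd (snd q))) L]"

definition fill_cond :: "cond \<Rightarrow> nat \<Rightarrow> nat \<Rightarrow> cond" where
  "fill_cond q c L = (width q, stems q, fill_pending q c L)"

lemma pending_fill_cond: "pending (fill_cond q c L) n = (if n < max (length (snd (snd q))) L then
    (if n < width q then pending q n else pending q n @ map (\<lambda>k. bit c (npair n k)) [length (pending q n) ..< rows_below L n])
   else [])"
  unfolding pending_def fill_cond_def fill_pending_def by simp

lemma pending_beyond: "length (snd (snd q)) \<le> n \<Longrightarrow> pending q n = []"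
  unfolding pending_def by simp

lemma cond_ext_fill_cond: "cond_ext q (fill_cond q c L)"
  unfolding cond_ext_def
proof (intro conjI allI impI)
  show "width (fill_cond q c L) = width q" "stems (fill_cond q c L) = stems q"
    unfolding fill_cond_def width_def stems_def by simp_all
  fix n assume "width q \<le> n"
  then show "prefix (pending q n) (pending (fill_cond q c L) n)"
    unfolding pending_fill_cond by (auto simp: pending_beyond)
qed

lemma cond_oracle_fill_cond_npair: "cond_oracle (fill_cond q c L) X (npair n k) = fill q X c L (npair n k)"
proof -
  have cmq: "width (fill_cond q c L) = width q" and ctq: "stems (fill_cond q c L) = stems q"
    unfolding fill_cond_def width_def stems_def by simp_all
  show ?thesis
  proof (cases "n < width q")
    case True
    then show ?thesis unfolding fill_def cond_oracle_npair cmq ctq by simp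
  next
    case nm: False
    show ?thesis
    proof (cases "n < max (length (snd (snd q))) L")
      case True
      let ?s = "pending q n"
      let ?E = "map (\<lambda>k. bit c (npair n k)) [length ?s ..< rows_below L n]"
      have cs: "pending (fill_cond q c L) n = ?s @ ?E" unfolding pending_fill_cond using True nm by simp
      show ?thesis
      proof (cases "k < length ?s")
        case True
        then show ?thesis unfolding fill_def cond_oracle_npair cmq ctq cs using nm by (simp add: nth_append)
      next
        case False
        have "k < length (?s @ ?E) \<longleftrightarrow> k < rows_below L n" using False by auto
        also have "\<dots> \<longleftrightarrow> npair n k < L" by (rule rows_below_iff)
        finally have len: "k < length (?s @ ?E) \<longleftrightarrow> npair n k < L" .
        have v: "k < length (?s @ ?E) \<Longrightarrow> (?s @ ?E) ! k = bit c (npair n k)"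
          using False by (auto simp: nth_append)
        show ?thesis unfolding fill_def cond_oracle_npair cmq ctq cs using nm False len v by auto
      qed
    next
      case False
      then have "pending (fill_cond q c L) n = []" unfolding pending_fill_cond by simp
      moreover have "pending q n = []" using False by (simp add: pending_beyond)
      moreover have "\<not> npair n k < L" using False npair_ge_fst[of n k] by simp
      ultimately show ?thesis unfolding fill_def cond_oracle_npair cmq ctq using nm by simp
    qed
  qed
qed

lemma cond_oracle_fill_cond: "cond_oracle (fill_cond q c L) X = fill q X c L"
proof
  fix i
  show "cond_oracle (fill_cond q c L) X i = fill q X c L i"
    using cond_oracle_fill_cond_npair[of q c L X "nfst i" "nsnd i"] by (simp add: npair_nfst_nsnd)
qed

lemma fill_realized: "\<exists>q'. cond_ext q q' \<and> cond_oracle q' X = fill q X c L"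
  using cond_ext_fill_cond cond_oracle_fill_cond by blast

lemma fill_cover:
  assumes s: "cond_ext q q''" and le: "fill q X c L \<subseteq>\<^sub>m cond_oracle q'' X"
  shows "\<exists>c' L'. L \<le> L' \<and> c mod 2 ^ L = c' mod 2 ^ L \<and> cond_oracle q'' X |` {..<N} \<subseteq>\<^sub>m fill q X c' L'"
proof -
  let ?L' = "max L N"
  let ?B = "\<lambda>i. if i < L then bit c i else cond_oracle q'' X i = Some 1"
  obtain c' :: nat where c': "\<forall>i<?L'. bit c' i = ?B i" using ex_nat_bits[of ?L' ?B] by blast
  have m: "c mod 2 ^ L = c' mod 2 ^ L" unfolding mod_pow2_eq_iff_bits using c' by auto
  have "cond_oracle q'' X |` {..<N} \<subseteq>\<^sub>m fill q X c' ?L'"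
  proof (unfold map_le_def, intro ballI)
    fix i assume "i \<in> dom (cond_oracle q'' X |` {..<N})"
    then obtain v where iN: "i < N" and v: "cond_oracle q'' X i = Some v" by auto
    have r: "(cond_oracle q'' X |` {..<N}) i = Some v" using iN v by simp
    show "(cond_oracle q'' X |` {..<N}) i = fill q X c' ?L' i"
    proof (cases "cond_oracle q X i")
      case (Some b)
      then have "cond_oracle q'' X i = Some b" using cond_oracle_mono[OF s, of X] unfolding map_le_def by (metis domI)
      then show ?thesis using r v Some by (simp add: fill_def)
    next
      case None
      show ?thesis
      proof (cases "i < L")
        case True
        then have "fill q X c L i = Some (of_bool (bit c i))" using None by (simp add: fill_def)
        then have "cond_oracle q'' X i = Some (of_bool (bit c i))" using le unfolding map_le_def by (metis domI)
        then show ?thesis using r v None True c' by (simp add: fill_def)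
      next
        case False
        have "v = 0 \<or> v = 1" using cond_oracle_bit v by blast
        then show ?thesis using r v None False c' iN by (auto simp: fill_def)
      qed
    qed
  qed
  then show ?thesis using m by (intro exI[of _ c'] exI[of _ ?L']) auto
qed

abbreviation decided_oracle :: "cond \<Rightarrow> (nat \<Rightarrow> nat \<Rightarrow> bool) \<Rightarrow> nat \<Rightarrow> nat" where
  "decided_oracle q X \<equiv> \<lambda>i. of_bool (join_set (X ` {..<width q}) i)"

lemma rec_fun_cond_oracle: "rec_fun (decided_oracle q X) 1 (\<lambda>ys. ocode (cond_oracle q X (ys ! 0)))"
proof -
  let ?g = "decided_oracle q X"
  have "\<forall>n<width q. \<exists>a. \<forall>k. join_set (X ` {..<width q}) (npair a k) = X n k"
    by (intro allI impI join_set_npair) auto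
  then obtain idx0 where idx0: "\<forall>n<width q. \<forall>k. join_set (X ` {..<width q}) (npair (idx0 n) k) = X n k"
    by metis
  define idx where "idx n = (if n < width q then idx0 n else 0)" for n
  define lenT where "lenT n = (if n < width q then length (stems q ! n) else 0)" for n
  define tabT where "tabT n k = (of_bool (n < width q \<and> k < length (stems q ! n) \<and> stems q ! n ! k) :: nat)" for n k
  define lenS where "lenS n = (if width q \<le> n then length (pending q n) else 0)" for n
  define tabS where "tabS n k = (of_bool (width q \<le> n \<and> k < length (pending q n) \<and> pending q n ! k) :: nat)" for n k
  define M where "M = length (snd (snd q))"
  have f1: "finite {n. lenT n \<noteq> 0}" by (rule finite_subset[of _ "{..<width q}"]) (auto simp: lenT_def)
  have f2: "finite {n. idx n \<noteq> 0}" by (rule finite_subset[of _ "{..<width q}"]) (auto simp: idx_def)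
  have f3: "finite {n. lenS n \<noteq> 0}"
    by (rule finite_subset[of _ "{..<M}"]) (auto simp: lenS_def M_def pending_def)
  have f4: "finite {(n, k). tabT n k \<noteq> 0}"
    by (rule finite_subset[of _ "Sigma {..<width q} (\<lambda>n. {..<length (stems q ! n)})"]) (auto simp: tabT_def)
  have f5: "finite {(n, k). tabS n k \<noteq> 0}"
    by (rule finite_subset[of _ "Sigma {..<M} (\<lambda>n. {..<length (pending q n)})"])
       (auto simp: tabS_def M_def pending_def split: if_splits)
  have "rec_fun ?g 1 (\<lambda>ys. if nfst (ys ! 0) < width q
      then Suc (if nsnd (ys ! 0) < lenT (nfst (ys ! 0)) then tabT (nfst (ys ! 0)) (nsnd (ys ! 0))
        else ?g (npair (idx (nfst (ys ! 0))) (nsnd (ys ! 0))))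
      else if nsnd (ys ! 0) < lenS (nfst (ys ! 0)) then Suc (tabS (nfst (ys ! 0)) (nsnd (ys ! 0))) else 0)"
    by (intro rec_fun_if rec_pred_less rec_fun_nfst rec_fun_nsnd rec_fun_proj rec_fun_const rec_fun_Suc
        rec_fun_oracle rec_fun_npair rec_fun_finite_support[OF f1] rec_fun_finite_support[OF f2]
        rec_fun_finite_support[OF f3] rec_fun_finite_support2[OF f4] rec_fun_finite_support2[OF f5]) auto
  then show ?thesis
    by (rule rec_fun_cong)
       (use idx0 in \<open>auto simp: cond_oracle_def idx_def lenT_def tabT_def lenS_def tabS_def\<close>)
qed

lemma rec_fun_fill: "rec_fun (decided_oracle q X) 3 (\<lambda>ys. ocode (fill q X (ys ! 0) (ys ! 1) (ys ! 2)))"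
proof -
  have "rec_fun (decided_oracle q X) 3 (\<lambda>ys. ocode (cond_oracle q X (ys ! 2)))"
    by (rule rec_fun_lift1[OF rec_fun_cond_oracle rec_fun_proj]) simp
  then have "rec_fun (decided_oracle q X) 3 (\<lambda>ys. if ocode (cond_oracle q X (ys ! 2)) = 0
      then (if ys ! 2 < ys ! 1 then Suc (of_bool (odd (ys ! 0 div 2 ^ (ys ! 2)))) else 0)
      else ocode (cond_oracle q X (ys ! 2)))"
    by (intro rec_fun_if rec_pred_eq rec_pred_less rec_fun_const rec_fun_proj rec_fun_Suc rec_fun_of_bool
        rec_pred_odd_div) auto
  then show ?thesis
    by (rule rec_fun_cong) (auto simp: fill_def ocode_eq_0_iff bit_iff_odd split: option.splits)
qed

section \<open>Density of forcing conditions\<close>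

definition converges_to :: "(nat \<Rightarrow> nat option) \<Rightarrow> prog \<Rightarrow> nat list \<Rightarrow> bool" where
  "converges_to Q p v \<longleftrightarrow> (\<forall>k<length v. \<exists>s. run Q s p [k] = Some (v ! k))"

definition to_bits :: "nat list \<Rightarrow> bool list" where
  "to_bits v = map (\<lambda>b. b \<noteq> 0) v"

definition forces :: "bool list set \<Rightarrow> prog \<Rightarrow> cond \<Rightarrow> (nat \<Rightarrow> nat \<Rightarrow> bool) \<Rightarrow> bool" where
  "forces T p q X \<longleftrightarrow>
     (\<exists>k. \<forall>q'. cond_ext q q' \<longrightarrow> (\<forall>s. run (cond_oracle q' X) s p [k] = None))
   \<or> (\<exists>v. converges_to (cond_oracle q X) p v \<and> to_bits v \<notin> T)
   \<or> (\<forall>q' v. cond_ext q q' \<longrightarrow> converges_to (cond_oracle q' X) p v \<longrightarrow>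
        (\<exists>j<width q. to_bits v = map (X j) [0..<length v]))"

lemma converges_to_mono: "converges_to Q p v \<Longrightarrow> Q \<subseteq>\<^sub>m Q' \<Longrightarrow> converges_to Q' p v"
  unfolding converges_to_def by (meson order_refl run_mono)

lemma converges_to_finite_use:
  assumes "converges_to Q p v"
  shows "\<exists>N. converges_to (Q |` {..<N}) p v"
proof -
  have "\<forall>k\<in>{..<length v}. eventually (\<lambda>N. \<exists>s. run (Q |` {..<N}) s p [k] = Some (v ! k)) sequentially"
    using assms run_finite_use unfolding converges_to_def by (blast intro: eventually_mono)
  then have "eventually (\<lambda>N. \<forall>k\<in>{..<length v}. \<exists>s. run (Q |` {..<N}) s p [k] = Some (v ! k)) sequentially"
    by (rule eventually_ball_finite[OF finite_lessThan])
  then obtain N where "\<forall>k\<in>{..<length v}. \<exists>s. run (Q |` {..<N}) s p [k] = Some (v ! k)"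
    using eventually_happens'[OF sequentially_bot] by blast
  then show ?thesis unfolding converges_to_def by auto
qed

text \<open>
  Searching the extensions of q: a state st stands for the oracle fill q X (nfst st) (nsnd st),
  and a hit t for st on input k for a larger such oracle, fill q X c' L' with c' = nfst t and
  L' = nfst (nsnd t), under which p converges on k with fuel nsnd (nsnd t).
\<close>

definition hit :: "cond \<Rightarrow> (nat \<Rightarrow> nat \<Rightarrow> bool) \<Rightarrow> prog \<Rightarrow> nat \<Rightarrow> nat \<Rightarrow> nat \<Rightarrow> bool" where
  "hit q X p st k t \<longleftrightarrow> nsnd st \<le> nfst (nsnd t) \<and> nfst st mod 2 ^ nsnd st = nfst t mod 2 ^ nsnd st \<and>
     run (fill q X (nfst t) (nfst (nsnd t))) (nsnd (nsnd t)) p [k] \<noteq> None"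

definition first_hit :: "cond \<Rightarrow> (nat \<Rightarrow> nat \<Rightarrow> bool) \<Rightarrow> prog \<Rightarrow> nat \<Rightarrow> nat \<Rightarrow> nat" where
  "first_hit q X p st k = (LEAST t. hit q X p st k t)"

definition next_state :: "cond \<Rightarrow> (nat \<Rightarrow> nat \<Rightarrow> bool) \<Rightarrow> prog \<Rightarrow> nat \<Rightarrow> nat \<Rightarrow> nat" where
  "next_state q X p st k = npair (nfst (first_hit q X p st k)) (nfst (nsnd (first_hit q X p st k)))"

definition hit_value :: "cond \<Rightarrow> (nat \<Rightarrow> nat \<Rightarrow> bool) \<Rightarrow> prog \<Rightarrow> nat \<Rightarrow> nat \<Rightarrow> nat" where
  "hit_value q X p st k = ocode (run (fill q X (nfst (first_hit q X p st k)) (nfst (nsnd (first_hit q X p st k))))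
      (nsnd (nsnd (first_hit q X p st k))) p [k]) - 1"

definition trail :: "cond \<Rightarrow> (nat \<Rightarrow> nat \<Rightarrow> bool) \<Rightarrow> prog \<Rightarrow> nat \<Rightarrow> nat \<Rightarrow> nat" where
  "trail q X p st0 k = rec_nat st0 (\<lambda>j r. next_state q X p r j) k"

definition trail_oracle :: "cond \<Rightarrow> (nat \<Rightarrow> nat \<Rightarrow> bool) \<Rightarrow> prog \<Rightarrow> nat \<Rightarrow> nat \<Rightarrow> nat \<Rightarrow> nat option" where
  "trail_oracle q X p st0 k = fill q X (nfst (trail q X p st0 k)) (nsnd (trail q X p st0 k))"

definition search_path :: "cond \<Rightarrow> (nat \<Rightarrow> nat \<Rightarrow> bool) \<Rightarrow> prog \<Rightarrow> nat \<Rightarrow> nat \<Rightarrow> bool" where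
  "search_path q X p st0 k = (hit_value q X p (trail q X p st0 k) k \<noteq> 0)"

lemma ex_hit:
  assumes conv: "\<And>q'. cond_ext q q' \<Longrightarrow> \<exists>q''. cond_ext q' q'' \<and> (\<exists>s. run (cond_oracle q'' X) s p [k] \<noteq> None)"
  shows "\<exists>t. hit q X p st k t"
proof -
  let ?c = "nfst st" and ?L = "nsnd st"
  obtain q' where q': "cond_ext q q'" "cond_oracle q' X = fill q X ?c ?L" using fill_realized by blast
  obtain q'' s w where q'': "cond_ext q' q''" "run (cond_oracle q'' X) s p [k] = Some w"
    using conv[OF q'(1)] by blast
  obtain N where N: "run (cond_oracle q'' X |` {..<N}) s p [k] = Some w"
    using eventually_happens'[OF sequentially_bot run_finite_use[OF q''(2)]] by blast
  have le: "fill q X ?c ?L \<subseteq>\<^sub>m cond_oracle q'' X" using cond_oracle_mono[OF q''(1), of X] q'(2) by simp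
  obtain c' L' where cL: "?L \<le> L'" "?c mod 2 ^ ?L = c' mod 2 ^ ?L"
    "cond_oracle q'' X |` {..<N} \<subseteq>\<^sub>m fill q X c' L'"
    using fill_cover[OF cond_ext_trans[OF q'(1) q''(1)] le] by blast
  have "run (fill q X c' L') s p [k] = Some w" using run_mono[OF N cL(3)] by simp
  then have "hit q X p st k (npair c' (npair L' s))"
    unfolding hit_def using cL by (simp add: nfst_npair nsnd_npair)
  then show ?thesis by blast
qed

lemma hit_first_hit: "(\<And>st k. \<exists>t. hit q X p st k t) \<Longrightarrow> hit q X p st k (first_hit q X p st k)"
  unfolding first_hit_def by (rule LeastI_ex) blast

lemma trail_oracle_Suc:
  "trail_oracle q X p st0 (Suc k) =
     fill q X (nfst (first_hit q X p (trail q X p st0 k) k)) (nfst (nsnd (first_hit q X p (trail q X p st0 k) k)))"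
  unfolding trail_oracle_def trail_def next_state_def by (simp add: nfst_npair nsnd_npair)

lemma trail_oracle_mono:
  assumes hits: "\<And>st k. \<exists>t. hit q X p st k t" and "j \<le> j'"
  shows "trail_oracle q X p st0 j \<subseteq>\<^sub>m trail_oracle q X p st0 j'"
  using assms(2)
proof (induction j' rule: dec_induct)
  case (step j')
  have "hit q X p (trail q X p st0 j') j' (first_hit q X p (trail q X p st0 j') j')"
    by (rule hit_first_hit[OF hits])
  then have "trail_oracle q X p st0 j' \<subseteq>\<^sub>m trail_oracle q X p st0 (Suc j')"
    unfolding trail_oracle_Suc by (subst trail_oracle_def, intro fill_mono) (auto simp: hit_def)
  with step.IH show ?case by (rule map_le_trans)
qed simp

lemma trail_converges:
  assumes hits: "\<And>st k. \<exists>t. hit q X p st k t"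
  shows "\<exists>s. run (trail_oracle q X p st0 (Suc k)) s p [k] = Some (hit_value q X p (trail q X p st0 k) k)"
proof -
  let ?t = "first_hit q X p (trail q X p st0 k) k"
  have "hit q X p (trail q X p st0 k) k ?t" by (rule hit_first_hit[OF hits])
  then obtain w where "run (fill q X (nfst ?t) (nfst (nsnd ?t))) (nsnd (nsnd ?t)) p [k] = Some w"
    unfolding hit_def by auto
  then show ?thesis unfolding trail_oracle_Suc hit_value_def by auto
qed

lemma trail_converges_to:
  assumes hits: "\<And>st k. \<exists>t. hit q X p st k t"
  shows "converges_to (trail_oracle q X p st0 l) p (map (\<lambda>k. hit_value q X p (trail q X p st0 k) k) [0..<l])"
  unfolding converges_to_def
proof (intro allI impI)
  fix k assume "k < length (map (\<lambda>k. hit_value q X p (trail q X p st0 k) k) [0..<l])"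
  then have k: "k < l" by simp
  obtain s where "run (trail_oracle q X p st0 (Suc k)) s p [k] = Some (hit_value q X p (trail q X p st0 k) k)"
    using trail_converges[OF hits] by blast
  then have "run (trail_oracle q X p st0 l) s p [k] = Some (hit_value q X p (trail q X p st0 k) k)"
    by (rule run_mono[OF _ trail_oracle_mono[OF hits]]) (use k in auto)
  then show "\<exists>s. run (trail_oracle q X p st0 l) s p [k] =
      Some (map (\<lambda>k. hit_value q X p (trail q X p st0 k) k) [0..<l] ! k)" using k by auto
qed

lemma search_path_in_paths:
  assumes hits: "\<And>st k. \<exists>t. hit q X p st k t"
    and in_T: "\<And>q' v. cond_ext q q' \<Longrightarrow> converges_to (cond_oracle q' X) p v \<Longrightarrow> to_bits v \<in> T"
  shows "search_path q X p st0 \<in> paths T"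
  unfolding paths_def
proof (intro CollectI allI)
  fix l
  obtain q' where q': "cond_ext q q'" "cond_oracle q' X = trail_oracle q X p st0 l"
    unfolding trail_oracle_def using fill_realized by blast
  have "to_bits (map (\<lambda>k. hit_value q X p (trail q X p st0 k) k) [0..<l]) \<in> T"
    using in_T[OF q'(1)] trail_converges_to[OF hits] q'(2) by simp
  then show "map (search_path q X p st0) [0..<l] \<in> T"
    unfolding to_bits_def search_path_def by (simp add: comp_def)
qed

lemma search_path_prefix:
  assumes hits: "\<And>st k. \<exists>t. hit q X p st k t"
    and conv: "converges_to Q p v" and le: "Q \<subseteq>\<^sub>m fill q X c L"
  shows "map (search_path q X p (npair c L)) [0..<length v] = to_bits v"
proof (rule nth_equalityI)
  fix k assume "k < length (map (search_path q X p (npair c L)) [0..<length v])"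
  then have k: "k < length v" by simp
  obtain s where s: "run Q s p [k] = Some (v ! k)" using conv k unfolding converges_to_def by blast
  have "fill q X c L \<subseteq>\<^sub>m trail_oracle q X p (npair c L) (Suc k)"
    using trail_oracle_mono[OF hits, of 0 "Suc k" "npair c L"]
    by (simp add: trail_oracle_def trail_def nfst_npair nsnd_npair)
  with le have le': "Q \<subseteq>\<^sub>m trail_oracle q X p (npair c L) (Suc k)" by (rule map_le_trans)
  obtain s' where s': "run (trail_oracle q X p (npair c L) (Suc k)) s' p [k]
      = Some (hit_value q X p (trail q X p (npair c L) k) k)"
    using trail_converges[OF hits] by blast
  have "v ! k = hit_value q X p (trail q X p (npair c L) k) k" by (rule run_det[OF s s' le'])
  then show "map (search_path q X p (npair c L)) [0..<length v] ! k = to_bits v ! k"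
    using k by (simp add: search_path_def to_bits_def)
qed (simp add: to_bits_def)

lemma turing_le_of_rec_fun: "rec_fun (\<lambda>i. of_bool (x i)) 1 (\<lambda>xs. of_bool (y (xs ! 0))) \<Longrightarrow> turing_le y x"
  unfolding rec_fun_def turing_le_def by force

lemma rec_fun_run_fill:
  assumes "rec_fun (decided_oracle q X) n A" "rec_fun (decided_oracle q X) n B"
    "rec_fun (decided_oracle q X) n C" "rec_fun (decided_oracle q X) n D"
  shows "rec_fun (decided_oracle q X) n (\<lambda>xs. ocode (run (fill q X (B xs) (C xs)) (A xs) p [D xs]))"
proof -
  have "rec_fun (decided_oracle q X) (1 + 3) (run_code (fill q X) p)"
    by (rule rec_fun_run_code[OF rec_fun_fill])
  from rec_fun_comp4[OF this[simplified] assms] show ?thesis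
    by (simp add: run_code_def)
qed

lemma rec_fun_first_hit:
  assumes hits: "\<And>st k. \<exists>t. hit q X p st k t"
  shows "rec_fun (decided_oracle q X) 2 (\<lambda>xs. first_hit q X p (xs ! 0) (xs ! 1))"
proof -
  have "rec_pred (decided_oracle q X) (Suc 2) (\<lambda>ys. nsnd (ys ! 1) \<le> nfst (nsnd (ys ! 0)) \<and>
      nfst (ys ! 1) mod 2 ^ nsnd (ys ! 1) = nfst (ys ! 0) mod 2 ^ nsnd (ys ! 1) \<and>
      ocode (run (fill q X (nfst (ys ! 0)) (nfst (nsnd (ys ! 0)))) (nsnd (nsnd (ys ! 0))) p [ys ! 2]) \<noteq> 0)"
    by (intro rec_pred_conj rec_pred_le rec_pred_eq rec_pred_nonzero rec_fun_run_fill rec_fun_nfst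
        rec_fun_nsnd rec_fun_proj rec_fun_mod rec_fun_pow2) auto
  then have "rec_pred (decided_oracle q X) (Suc 2) (\<lambda>ys. hit q X p (ys ! 1) (ys ! 2) (ys ! 0))"
    by (rule rec_pred_cong) (simp add: hit_def ocode_eq_0_iff)
  then have "rec_fun (decided_oracle q X) 2 (\<lambda>xs. LEAST t. (\<lambda>ys. hit q X p (ys ! 1) (ys ! 2) (ys ! 0)) (t # xs))"
    by (rule rec_fun_Least_pred) (simp add: hits)
  then show ?thesis unfolding first_hit_def by simp
qed

lemma turing_le_search_path:
  assumes hits: "\<And>st k. \<exists>t. hit q X p st k t"
  shows "turing_le (search_path q X p st0) (join_set (X ` {..<width q}))"
proof -
  let ?g = "decided_oracle q X"
  have first_hit: "rec_fun ?g n (\<lambda>xs. first_hit q X p (A xs) (B xs))"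
    if "rec_fun ?g n A" "rec_fun ?g n B" for n A B
    by (rule rec_fun_lift2[OF rec_fun_first_hit[OF hits] that])
  have next_state: "rec_fun ?g 3 (\<lambda>xs. next_state q X p (xs ! 1) (xs ! 0))"
    unfolding next_state_def by (intro rec_fun_npair rec_fun_nfst rec_fun_nsnd first_hit rec_fun_proj) auto
  have "rec_fun ?g 1 (\<lambda>xs. rec_nat st0 (\<lambda>j r. (\<lambda>zs. next_state q X p (zs ! 1) (zs ! 0)) (j # r # xs)) (xs ! 0))"
    by (rule rec_fun_rec_nat[OF rec_fun_const _ rec_fun_proj]) (use next_state in \<open>simp_all add: numeral_3_eq_3\<close>)
  then have trail: "rec_fun ?g 1 (\<lambda>xs. trail q X p st0 (xs ! 0))"
    unfolding trail_def by simp
  have "rec_fun ?g 1 (\<lambda>xs. of_bool (hit_value q X p (trail q X p st0 (xs ! 0)) (xs ! 0) \<noteq> 0))"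
    unfolding hit_value_def
    by (intro rec_fun_of_bool rec_pred_nonzero rec_fun_pred rec_fun_run_fill rec_fun_npair rec_fun_nfst
        rec_fun_nsnd first_hit trail rec_fun_proj) auto
  then show ?thesis unfolding search_path_def by (rule turing_le_of_rec_fun)
qed

lemma forces_dense:
  assumes ind: "turing_independent (paths T)" and X: "\<forall>j<width q. X j \<in> paths T"
  shows "\<exists>q'. cond_ext q q' \<and> forces T p q' X"
proof (rule ccontr)
  assume "\<not> ?thesis"
  then have no_force: "\<And>q'. cond_ext q q' \<Longrightarrow> \<not> forces T p q' X" by blast
  have hits: "\<exists>t. hit q X p st k t" for st k
  proof (rule ex_hit)
    fix q' assume "cond_ext q q'"
    then show "\<exists>q''. cond_ext q' q'' \<and> (\<exists>s. run (cond_oracle q'' X) s p [k] \<noteq> None)"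
      using no_force unfolding forces_def by blast
  qed
  have in_T: "\<And>q' v. cond_ext q q' \<Longrightarrow> converges_to (cond_oracle q' X) p v \<Longrightarrow> to_bits v \<in> T"
    using no_force unfolding forces_def by blast
  obtain q1 v1 where q1: "cond_ext q q1" "converges_to (cond_oracle q1 X) p v1"
    "\<forall>j<width q. to_bits v1 \<noteq> map (X j) [0..<length v1]"
    using no_force[OF cond_ext_refl] unfolding forces_def by blast
  obtain N where N: "converges_to (cond_oracle q1 X |` {..<N}) p v1"
    using converges_to_finite_use[OF q1(2)] by blast
  have "fill q X 0 0 \<subseteq>\<^sub>m cond_oracle q1 X" using fill_0[of q X 0] cond_oracle_mono[OF q1(1), of X] by simp
  with fill_cover[OF q1(1)] obtain c L where cL: "cond_oracle q1 X |` {..<N} \<subseteq>\<^sub>m fill q X c L"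
    by blast
  define y where "y = search_path q X p (npair c L)"
  have "y \<notin> X ` {..<width q}"
    using search_path_prefix[OF hits N cL] q1(3) unfolding y_def by auto
  moreover have "y \<in> paths T" unfolding y_def by (rule search_path_in_paths[OF hits in_T])
  moreover have "X ` {..<width q} \<subseteq> paths T" using X by auto
  ultimately have "\<not> turing_le y (join_set (X ` {..<width q}))"
    using ind unfolding turing_independent_def by blast
  moreover have "turing_le y (join_set (X ` {..<width q}))"
    unfolding y_def by (rule turing_le_search_path[OF hits])
  ultimately show False by blast
qed

section \<open>The construction\<close>

instance prog :: countable by countable_datatype

definition commit :: "cond \<Rightarrow> cond" where
  "commit q = (Suc (width q), stems q @ [pending q (width q)], snd (snd q))"

definition meet :: "bool list set \<Rightarrow> prog \<Rightarrow> cond \<Rightarrow> (nat \<Rightarrow> nat \<Rightarrow> bool) \<Rightarrow> cond" where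
  "meet T p q X = (if \<exists>i. cond_ext q (from_nat i) \<and> forces T p (from_nat i) X
     then from_nat (LEAST i. cond_ext q (from_nat i) \<and> forces T p (from_nat i) X) else q)"

primrec stage :: "bool list set \<Rightarrow> (nat \<Rightarrow> nat \<Rightarrow> bool) \<Rightarrow> nat \<Rightarrow> cond" where
  "stage T X 0 = (0, [], [])"
| "stage T X (Suc e) = meet T (from_nat e) (commit (stage T X e)) X"

declare stage.simps(2)[simp del]

definition hjoin :: "bool list set \<Rightarrow> (nat \<Rightarrow> nat \<Rightarrow> bool) \<Rightarrow> nat \<Rightarrow> bool" where
  "hjoin T X i = (if nsnd i < length (stems (stage T X (Suc (nfst i))) ! nfst i)
      then stems (stage T X (Suc (nfst i))) ! nfst i ! nsnd i else X (nfst i) (nsnd i))"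

lemma width_commit: "width (commit q) = Suc (width q)" unfolding commit_def width_def by simp
lemma stems_commit: "stems (commit q) = stems q @ [pending q (width q)]" unfolding commit_def stems_def by simp
lemma pending_commit: "pending (commit q) n = pending q n" unfolding commit_def pending_def by simp

lemma cond_ext_meet: "cond_ext q (meet T p q X)"
proof (cases "\<exists>i. cond_ext q (from_nat i) \<and> forces T p (from_nat i) X")
  case True
  then have "cond_ext q (from_nat (LEAST i. cond_ext q (from_nat i) \<and> forces T p (from_nat i) X)) \<and>
     forces T p (from_nat (LEAST i. cond_ext q (from_nat i) \<and> forces T p (from_nat i) X)) X"
    by (rule LeastI_ex)
  then show ?thesis using True unfolding meet_def by simp
next
  case False
  then show ?thesis unfolding meet_def by (subst if_not_P[OF False]) (rule cond_ext_refl)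
qed

lemma cond_ext_stage: "cond_ext (commit (stage T X e)) (stage T X (Suc e))"
  unfolding stage.simps(2) by (rule cond_ext_meet)

lemma forces_meet: "\<exists>q'. cond_ext q q' \<and> forces T p q' X \<Longrightarrow> forces T p (meet T p q X) X"
proof -
  assume "\<exists>q'. cond_ext q q' \<and> forces T p q' X"
  then obtain q' where "cond_ext q q'" "forces T p q' X" by blast
  then have ex: "\<exists>i. cond_ext q (from_nat i) \<and> forces T p (from_nat i) X"
    by (intro exI[of _ "to_nat q'"]) simp
  then have "cond_ext q (from_nat (LEAST i. cond_ext q (from_nat i) \<and> forces T p (from_nat i) X)) \<and>
     forces T p (from_nat (LEAST i. cond_ext q (from_nat i) \<and> forces T p (from_nat i) X)) X"
    by (rule LeastI_ex)
  then show ?thesis using ex unfolding meet_def by simp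
qed

lemma width_stage: "width (stage T X e) = e \<and> length (stems (stage T X e)) = e"
proof (induction e)
  case 0 then show ?case by (simp add: width_def stems_def)
next
  case (Suc e)
  have s: "cond_ext (commit (stage T X e)) (stage T X (Suc e))" by (rule cond_ext_stage)
  then show ?case using Suc unfolding cond_ext_def by (simp add: width_commit stems_commit)
qed

lemma stems_stage_Suc: "stems (stage T X (Suc e)) = stems (stage T X e) @ [pending (stage T X e) e]"
proof -
  have s: "cond_ext (commit (stage T X e)) (stage T X (Suc e))" by (rule cond_ext_stage)
  then show ?thesis using width_stage[of T X e] unfolding cond_ext_def by (simp add: stems_commit)
qed

lemma stems_stage_mono: "e \<le> e' \<Longrightarrow> n < e \<Longrightarrow> stems (stage T X e') ! n = stems (stage T X e) ! n"
proof (induction e' rule: dec_induct)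
  case base then show ?case by simp
next
  case (step e')
  then show ?case using width_stage[of T X e'] by (simp add: stems_stage_Suc nth_append)
qed

lemma pending_stage_mono: "e \<le> e' \<Longrightarrow> e' \<le> n \<Longrightarrow> prefix (pending (stage T X e) n) (pending (stage T X e') n)"
proof (induction e' rule: dec_induct)
  case base then show ?case by simp
next
  case (step e')
  have s: "cond_ext (commit (stage T X e')) (stage T X (Suc e'))" by (rule cond_ext_stage)
  have "prefix (pending (commit (stage T X e')) n) (pending (stage T X (Suc e')) n)"
    using s step.prems width_stage[of T X e'] unfolding cond_ext_def by (simp add: width_commit)
  then have "prefix (pending (stage T X e') n) (pending (stage T X (Suc e')) n)" by (simp add: pending_commit)
  moreover have "prefix (pending (stage T X e) n) (pending (stage T X e') n)" using step by simp
  ultimately show ?case using prefix_order.order_trans by blast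
qed

lemma stems_stage_nth: "stems (stage T X (Suc n)) ! n = pending (stage T X n) n"
  using width_stage[of T X n] by (simp add: stems_stage_Suc nth_append)

lemma cond_oracle_stage_le: "cond_oracle (stage T X e) X \<subseteq>\<^sub>m (\<lambda>i. Some (of_bool (hjoin T X i)))"
proof (unfold map_le_def, intro ballI)
  fix i assume i: "i \<in> dom (cond_oracle (stage T X e) X)"
  let ?n = "nfst i" and ?k = "nsnd i"
  show "cond_oracle (stage T X e) X i = Some (of_bool (hjoin T X i))"
  proof (cases "?n < e")
    case True
    have "stems (stage T X e) ! ?n = stems (stage T X (Suc ?n)) ! ?n"
      using stems_stage_mono[of "Suc ?n" e ?n T X] True by simp
    then show ?thesis using True width_stage[of T X e] unfolding cond_oracle_def hjoin_def by simp
  next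
    case False
    then have k: "?k < length (pending (stage T X e) ?n)" using i width_stage[of T X e]
      unfolding cond_oracle_def by (auto split: if_splits)
    have "prefix (pending (stage T X e) ?n) (stems (stage T X (Suc ?n)) ! ?n)"
      using pending_stage_mono[of e ?n ?n T X] False by (simp add: stems_stage_nth)
    then obtain zs where zs: "stems (stage T X (Suc ?n)) ! ?n = pending (stage T X e) ?n @ zs"
      unfolding prefix_def by blast
    show ?thesis using False k width_stage[of T X e] unfolding cond_oracle_def hjoin_def zs
      by (simp add: nth_append)
  qed
qed

lemma stage_forces:
  assumes ind: "turing_independent (paths T)" and XT: "\<forall>n. X n \<in> paths T"
  shows "forces T (from_nat e) (stage T X (Suc e)) X"
proof -
  have "\<exists>q'. cond_ext (commit (stage T X e)) q' \<and> forces T (from_nat e) q' X"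
    by (rule forces_dense[OF ind]) (use XT in auto)
  then show ?thesis unfolding stage.simps(2) by (rule forces_meet)
qed

definition approx_cond :: "cond \<Rightarrow> (nat \<Rightarrow> bool) \<Rightarrow> nat \<Rightarrow> cond" where
  "approx_cond q G N = (width q, stems q, map (\<lambda>n. if n < width q then pending q n
      else map (\<lambda>k. G (npair n k)) [0..<max N (length (pending q n))]) [0..<max N (length (snd (snd q)))])"

lemma pending_approx_cond:
  "pending (approx_cond q G N) n = (if n < max N (length (snd (snd q))) then (if n < width q then pending q n
      else map (\<lambda>k. G (npair n k)) [0..<max N (length (pending q n))]) else [])"
  unfolding approx_cond_def pending_def by simp

lemma width_approx_cond: "width (approx_cond q G N) = width q"
  and stems_approx_cond: "stems (approx_cond q G N) = stems q"
  unfolding approx_cond_def width_def stems_def by simp_all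

lemma cond_oracle_approx_cond_committed:
  "nfst i < width q \<Longrightarrow> cond_oracle (approx_cond q G N) X i = cond_oracle q X i"
  unfolding cond_oracle_def width_approx_cond stems_approx_cond by simp

lemma pending_nth_eq:
  assumes "cond_oracle q X \<subseteq>\<^sub>m (\<lambda>i. Some (of_bool (G i)))" "width q \<le> n" "k < length (pending q n)"
  shows "pending q n ! k = G (npair n k)"
proof -
  have "cond_oracle q X (npair n k) = Some (of_bool (pending q n ! k))"
    using assms(2,3) by (simp add: cond_oracle_npair)
  then show ?thesis using assms(1) unfolding map_le_def by (metis domI of_bool_eq_iff option.inject)
qed

lemma cond_ext_approx_cond:
  assumes "cond_oracle q X \<subseteq>\<^sub>m (\<lambda>i. Some (of_bool (G i)))"
  shows "cond_ext q (approx_cond q G N)"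
  unfolding cond_ext_def width_approx_cond stems_approx_cond
proof (intro conjI allI impI refl)
  fix n assume n: "width q \<le> n"
  show "prefix (pending q n) (pending (approx_cond q G N) n)"
  proof (cases "n < max N (length (snd (snd q)))")
    case True
    let ?L = "map (\<lambda>k. G (npair n k)) [0..<max N (length (pending q n))]"
    have "pending q n = take (length (pending q n)) ?L"
      using pending_nth_eq[OF assms n] by (auto intro!: nth_equalityI)
    then show ?thesis
      using True n take_is_prefix[of "length (pending q n)" ?L] by (simp add: pending_approx_cond)
  next
    case False
    then show ?thesis by (simp add: pending_approx_cond pending_beyond)
  qed
qed

lemma cond_oracle_approx_cond_le:
  assumes le: "cond_oracle q X \<subseteq>\<^sub>m (\<lambda>i. Some (of_bool (G i)))"
  shows "cond_oracle (approx_cond q G N) X \<subseteq>\<^sub>m (\<lambda>i. Some (of_bool (G i)))"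
  unfolding map_le_def
proof
  fix i assume i: "i \<in> dom (cond_oracle (approx_cond q G N) X)"
  show "cond_oracle (approx_cond q G N) X i = Some (of_bool (G i))"
  proof (cases "nfst i < width q")
    case True
    then have "cond_oracle q X i \<noteq> None" by (simp add: cond_oracle_def)
    then have "cond_oracle q X i = Some (of_bool (G i))" using le by (metis domIff map_le_def)
    then show ?thesis using cond_oracle_approx_cond_committed[OF True] by simp
  next
    case False
    with i have "nsnd i < length (pending (approx_cond q G N) (nfst i))"
      unfolding cond_oracle_def width_approx_cond by (auto split: if_splits)
    with False show ?thesis
      unfolding cond_oracle_def width_approx_cond
      by (auto simp: pending_approx_cond npair_nfst_nsnd split: if_splits)
  qed
qed

lemma restrict_le_cond_oracle_approx_cond:
  assumes le: "cond_oracle q X \<subseteq>\<^sub>m (\<lambda>i. Some (of_bool (G i)))"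
  shows "(\<lambda>i. Some (of_bool (G i))) |` {..<N} \<subseteq>\<^sub>m cond_oracle (approx_cond q G N) X"
  unfolding map_le_def
proof
  fix i assume "i \<in> dom ((\<lambda>i. Some (of_bool (G i))) |` {..<N})"
  then have iN: "i < N" by auto
  have "cond_oracle (approx_cond q G N) X i = Some (of_bool (G i))"
  proof (cases "nfst i < width q")
    case True
    then have "cond_oracle q X i \<noteq> None" by (simp add: cond_oracle_def)
    then have "cond_oracle q X i = Some (of_bool (G i))" using le by (metis domIff map_le_def)
    then show ?thesis using cond_oracle_approx_cond_committed[OF True] by simp
  next
    case False
    moreover have "nfst i < N" "nsnd i < N" using iN nfst_le[of i] nsnd_le[of i] by linarith+
    ultimately show ?thesis
      unfolding cond_oracle_def width_approx_cond
      by (simp add: pending_approx_cond npair_nfst_nsnd less_max_iff_disj)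
  qed
  then show "((\<lambda>i. Some (of_bool (G i))) |` {..<N}) i = cond_oracle (approx_cond q G N) X i"
    using iN by simp
qed

lemma computes_run: "computes g n f p \<Longrightarrow> length xs = n \<Longrightarrow> \<exists>s. run (\<lambda>i. Some (g i)) s p xs = Some (f xs)"
  unfolding computes_def using eventually_happens'[OF sequentially_bot] by blast

lemma converges_to_eq_computed:
  assumes conv: "converges_to Q p v" and le: "Q \<subseteq>\<^sub>m (\<lambda>i. Some (g i))" and p: "computes g 1 f p"
  shows "v = map (\<lambda>k. f [k]) [0..<length v]"
proof (rule nth_equalityI)
  fix k assume "k < length v"
  then obtain s where s: "run (\<lambda>i. Some (g i)) s p [k] = Some (v ! k)"
    using converges_to_mono[OF conv le] unfolding converges_to_def by blast
  obtain s' where s': "run (\<lambda>i. Some (g i)) s' p [k] = Some (f [k])"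
    using computes_run[OF p, of "[k]"] by auto
  show "v ! k = map (\<lambda>k. f [k]) [0..<length v] ! k"
    using run_det[OF s s' map_le_refl] \<open>k < length v\<close> by simp
qed simp

lemma ex_cond_converges_to:
  assumes le: "cond_oracle q X \<subseteq>\<^sub>m (\<lambda>i. Some (of_bool (G i)))"
    and p: "computes (\<lambda>i. of_bool (G i)) 1 f p"
  shows "\<exists>q'. cond_ext q q' \<and> cond_oracle q' X \<subseteq>\<^sub>m (\<lambda>i. Some (of_bool (G i))) \<and>
           converges_to (cond_oracle q' X) p (map (\<lambda>k. f [k]) [0..<l])"
proof -
  have "converges_to (\<lambda>i. Some (of_bool (G i))) p (map (\<lambda>k. f [k]) [0..<l])"
    using computes_run[OF p] unfolding converges_to_def by simp
  then obtain N where "converges_to ((\<lambda>i. Some (of_bool (G i))) |` {..<N}) p (map (\<lambda>k. f [k]) [0..<l])"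
    using converges_to_finite_use by blast
  then have "converges_to (cond_oracle (approx_cond q G N) X) p (map (\<lambda>k. f [k]) [0..<l])"
    using converges_to_mono restrict_le_cond_oracle_approx_cond[OF le] by blast
  then show ?thesis using cond_ext_approx_cond[OF le] cond_oracle_approx_cond_le[OF le] by blast
qed

lemma eventually_map_upt_neq:
  assumes "y \<noteq> x"
  shows "eventually (\<lambda>l. map y [0..<l] \<noteq> map x [0..<l]) sequentially"
proof -
  obtain k where k: "y k \<noteq> x k" using assms by blast
  have "map y [0..<l] \<noteq> map x [0..<l]" if "Suc k \<le> l" for l
  proof
    assume "map y [0..<l] = map x [0..<l]"
    then have "map y [0..<l] ! k = map x [0..<l] ! k" by (rule arg_cong)
    with k that show False by simp
  qed
  then show ?thesis by (rule eventually_sequentiallyI)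
qed

text \<open>
  If p computes a path y with the oracle h, the condition met for p at its stage leaves only
  the third alternative of forcing, which makes y one of the decided columns.
\<close>

lemma not_turing_le_hjoin:
  assumes ind: "turing_independent (paths T)" and X: "\<forall>n. X n \<in> paths T"
    and y: "y \<in> paths T" "y \<notin> range X"
  shows "\<not> turing_le y (hjoin T X)"
proof
  assume "turing_le y (hjoin T X)"
  then obtain f where f: "rec_in (\<lambda>i. of_bool (hjoin T X i)) 1 f" and fy: "\<forall>n. f [n] = of_bool (y n)"
    unfolding turing_le_def by blast
  obtain p where p: "computes (\<lambda>i. of_bool (hjoin T X i)) 1 f p" using rec_in_prog[OF f] by blast
  let ?q = "stage T X (Suc (to_nat p))"
  have le: "cond_oracle ?q X \<subseteq>\<^sub>m (\<lambda>i. Some (of_bool (hjoin T X i)))" by (rule cond_oracle_stage_le)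
  have bits: "to_bits (map (\<lambda>k. f [k]) [0..<l]) = map y [0..<l]" for l
    unfolding to_bits_def using fy by simp
  have "forces T p ?q X" using stage_forces[OF ind X, of "to_nat p"] by simp
  then consider (diverges) k where "\<forall>q'. cond_ext ?q q' \<longrightarrow> (\<forall>s. run (cond_oracle q' X) s p [k] = None)"
    | (off_T) v where "converges_to (cond_oracle ?q X) p v" "to_bits v \<notin> T"
    | (column) "\<forall>q' v. cond_ext ?q q' \<longrightarrow> converges_to (cond_oracle q' X) p v \<longrightarrow>
        (\<exists>j<width ?q. to_bits v = map (X j) [0..<length v])"
    unfolding forces_def by blast
  then show False
  proof cases
    case diverges
    with ex_cond_converges_to[OF le p, of "Suc k"] show False
      unfolding converges_to_def by (metis length_map length_upt lessI minus_nat.diff_0 not_Some_eq)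
  next
    case off_T
    then have "v = map (\<lambda>k. f [k]) [0..<length v]" using converges_to_eq_computed[OF _ le p] by blast
    then have "to_bits v = map y [0..<length v]" using bits by metis
    then show False using off_T(2) y(1) unfolding paths_def by auto
  next
    case column
    have "eventually (\<lambda>l. \<forall>j\<in>{..<width ?q}. map y [0..<l] \<noteq> map (X j) [0..<l]) sequentially"
      using y(2) by (intro eventually_ball_finite eventually_map_upt_neq ballI) auto
    then obtain l where l: "\<forall>j<width ?q. map y [0..<l] \<noteq> map (X j) [0..<l]"
      using eventually_happens'[OF sequentially_bot] by fastforce
    obtain q' where "cond_ext ?q q'" "converges_to (cond_oracle q' X) p (map (\<lambda>k. f [k]) [0..<l])"
      using ex_cond_converges_to[OF le p] by blast
    with column bits l show False by fastforce
  qed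
qed

text \<open>Column n of h agrees with X n beyond a finite stem, which is hard-wired as a table.\<close>

lemma turing_le_hjoin: "turing_le (X n) (hjoin T X)"
proof -
  let ?g = "\<lambda>i. of_bool (hjoin T X i) :: nat"
  let ?tau = "stems (stage T X (Suc n)) ! n"
  define tab where "tab k = (of_bool (k < length ?tau \<and> X n k) :: nat)" for k
  have fin: "finite {k. tab k \<noteq> 0}"
    by (rule finite_subset[of _ "{..<length ?tau}"]) (auto simp: tab_def)
  have "rec_fun ?g 1 (\<lambda>xs. if xs ! 0 < length ?tau then tab (xs ! 0) else ?g (npair n (xs ! 0)))"
    by (intro rec_fun_if rec_pred_less rec_fun_proj rec_fun_const rec_fun_finite_support[OF fin]
        rec_fun_oracle rec_fun_npair) auto
  then have "rec_fun ?g 1 (\<lambda>xs. of_bool (X n (xs ! 0)))"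
    by (rule rec_fun_cong) (auto simp: tab_def hjoin_def nfst_npair nsnd_npair)
  then show ?thesis by (rule turing_le_of_rec_fun)
qed

section \<open>Measurability\<close>

abbreviation count_meas :: "'a measure \<Rightarrow> ('a \<Rightarrow> 'c) \<Rightarrow> bool" where
  "count_meas M f \<equiv> f \<in> M \<rightarrow>\<^sub>M count_space UNIV"

lemma count_meas_const: "count_meas M (\<lambda>X. c)"
  by (rule measurable_const) simp

lemma count_meas_comp: "count_meas M f \<Longrightarrow> count_meas M (\<lambda>X. \<phi> (f X))"
  by (rule measurable_compose[OF _ measurable_count_space])

lemma count_meas_app:
  fixes g :: "'m \<Rightarrow> 'a::countable"
  shows "(\<And>a. count_meas M (F a)) \<Longrightarrow> count_meas M g \<Longrightarrow> count_meas M (\<lambda>X. F (g X) X)"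
  by (rule measurable_compose_countable'[where I=UNIV]) (auto intro: countableI_type)

lemma count_meas_bin:
  fixes f :: "'m \<Rightarrow> 'a::countable"
  shows "count_meas M f \<Longrightarrow> count_meas M g \<Longrightarrow> count_meas M (\<lambda>X. \<phi> (f X) (g X))"
  by (rule count_meas_app[where F="\<lambda>a X. \<phi> a (g X)" and g=f]) (auto intro: count_meas_comp)

lemma count_meas_all:
  fixes P :: "'i::countable \<Rightarrow> 'm \<Rightarrow> bool"
  shows "(\<And>i. count_meas M (P i)) \<Longrightarrow> count_meas M (\<lambda>X. \<forall>i. P i X)"
  using pred_intros_countable(1)[where M=M and P="\<lambda>X i. P i X"] by blast

lemma count_meas_ex:
  fixes P :: "'i::countable \<Rightarrow> 'm \<Rightarrow> bool"
  shows "(\<And>i. count_meas M (P i)) \<Longrightarrow> count_meas M (\<lambda>X. \<exists>i. P i X)"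
  using pred_intros_countable(2)[where M=M and P="\<lambda>X i. P i X"] by blast

lemma count_meas_coord: "count_meas borel (\<lambda>X :: nat \<Rightarrow> nat \<Rightarrow> bool. X n k)"
proof -
  have "continuous_on UNIV (\<lambda>X::nat \<Rightarrow> nat \<Rightarrow> bool. X n k)"
    by (rule continuous_on_product_then_coordinatewise[OF continuous_on_product_coordinates])
  then have "(\<lambda>X::nat \<Rightarrow> nat \<Rightarrow> bool. X n k) \<in> borel_measurable borel"
    by (rule borel_measurable_continuous_onI)
  then show ?thesis using measurable_cong_sets[OF refl sets_borel_eq_count_space] by blast
qed

lemma count_meas_map:
  assumes "\<And>f. f \<in> set L \<Longrightarrow> count_meas M (\<lambda>X. G f X)"
  shows "count_meas M (\<lambda>X. map (\<lambda>f. (G f X :: 'a::countable)) L)"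
  using assms
proof (induction L)
  case Nil then show ?case by (simp add: count_meas_const)
next
  case (Cons a L)
  have "count_meas M (\<lambda>X. G a X)" using Cons.prems by simp
  moreover have "count_meas M (\<lambda>X. map (\<lambda>f. G f X) L)" using Cons by simp
  ultimately have "count_meas M (\<lambda>X. (\<lambda>u v. u # v) (G a X) (map (\<lambda>f. G f X) L))" by (rule count_meas_bin)
  then show ?case by simp
qed

lemma count_meas_rec_nat:
  fixes A :: "'m \<Rightarrow> 'a::countable"
  assumes "count_meas M A" "\<And>k r. count_meas M (F k r)"
  shows "count_meas M (\<lambda>X. rec_nat (A X) (\<lambda>k r. F k r X) n)"
proof (induction n)
  case (Suc n)
  then show ?case using count_meas_app[OF assms(2) Suc] by simp
qed (simp add: assms)

lemma count_meas_run:
  assumes O: "\<And>i. count_meas M (\<lambda>X. \<Omega> X i)"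
  shows "count_meas M (\<lambda>X. run (\<Omega> X) s p xs)"
proof (induction p arbitrary: xs)
  case Zero then show ?case by (simp add: count_meas_const)
next
  case Succ then show ?case by (simp add: count_meas_const)
next
  case (Proj i) then show ?case by (simp add: count_meas_const)
next
  case Orac then show ?case by (simp add: O)
next
  case (Comp h fs)
  have R: "count_meas M (\<lambda>X. map (\<lambda>f. run (\<Omega> X) s f xs) fs)"
    by (rule count_meas_map) (rule Comp.IH(2))
  have "count_meas M (\<lambda>X. (\<lambda>rs X. if None \<in> set rs then None else run (\<Omega> X) s h (map the rs))
      (map (\<lambda>f. run (\<Omega> X) s f xs) fs) X)"
  proof (rule count_meas_app[OF _ R])
    fix rs :: "nat option list"
    show "count_meas M (\<lambda>X. if None \<in> set rs then None else run (\<Omega> X) s h (map the rs))"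
      by (cases "None \<in> set rs") (simp_all add: count_meas_const Comp.IH(1))
  qed
  moreover have e: "map (\<lambda>f. the (run (\<Omega> X) s f xs)) fs = map the (map (\<lambda>f. run (\<Omega> X) s f xs) fs)" for X
    by simp
  ultimately show ?case by (simp only: run.simps e)
next
  case (PRec b t)
  have "count_meas M (\<lambda>X. case r of None \<Rightarrow> None | Some v \<Rightarrow> run (\<Omega> X) s t (k # v # tl xs))" for k r
    by (cases r) (simp_all add: count_meas_const PRec.IH(2))
  then show ?case unfolding run.simps by (intro count_meas_rec_nat PRec.IH(1))
next
  case (Min f)
  have "count_meas M (\<lambda>X. search_step st t (run (\<Omega> X) s f (t # xs)))" for t st
    by (rule count_meas_comp[OF Min.IH])
  then have "count_meas M (\<lambda>X. search_state (\<lambda>t. run (\<Omega> X) s f (t # xs)) s)"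
    unfolding search_state_def by (intro count_meas_rec_nat count_meas_const)
  then show ?case by (simp add: count_meas_comp)
qed

lemma count_meas_conj: "count_meas M P \<Longrightarrow> count_meas M Q \<Longrightarrow> count_meas M (\<lambda>X. P X \<and> Q X)"
  by (rule count_meas_bin[where f=P and g=Q and \<phi>="(\<and>)"])

lemma count_meas_disj: "count_meas M P \<Longrightarrow> count_meas M Q \<Longrightarrow> count_meas M (\<lambda>X. P X \<or> Q X)"
  by (rule count_meas_bin[where f=P and g=Q and \<phi>="(\<or>)"])

lemma count_meas_imp: "count_meas M P \<Longrightarrow> count_meas M Q \<Longrightarrow> count_meas M (\<lambda>X. P X \<longrightarrow> Q X)"
  by (rule count_meas_bin[where f=P and g=Q and \<phi>="(\<longrightarrow>)"])

lemma count_meas_not: "count_meas M P \<Longrightarrow> count_meas M (\<lambda>X. \<not> P X)"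
  by (rule count_meas_comp)

lemma count_meas_eq:
  fixes f :: "'m \<Rightarrow> 'a::countable"
  shows "count_meas M f \<Longrightarrow> count_meas M g \<Longrightarrow> count_meas M (\<lambda>X. f X = g X)"
  by (rule count_meas_bin[where f=f and g=g and \<phi>="(=)"])

lemma count_meas_if: "count_meas M P \<Longrightarrow> count_meas M f \<Longrightarrow> count_meas M g \<Longrightarrow> count_meas M (\<lambda>X. if P X then f X else g X)"
proof -
  assume P: "count_meas M P" and f: "count_meas M f" and g: "count_meas M g"
  have "count_meas M (\<lambda>X. (\<lambda>b X. if b then f X else g X) (P X) X)"
  proof (rule count_meas_app[OF _ P])
    fix b show "count_meas M (\<lambda>X. if b then f X else g X)" using f g by (cases b) simp_all
  qed
  then show ?thesis by simp
qed

lemma count_meas_cond_oracle: "count_meas borel (\<lambda>X. cond_oracle q X i)"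
  unfolding cond_oracle_def
  using count_meas_comp[OF count_meas_coord[of "nfst i" "nsnd i"], where \<phi>="\<lambda>b. Some (of_bool b) :: nat option"]
  by (cases "nfst i < width q"; cases "nsnd i < length (stems q ! nfst i)") (simp_all add: count_meas_const)

lemma count_meas_run_cond_oracle: "count_meas borel (\<lambda>X. run (cond_oracle q X) s p xs)"
  by (rule count_meas_run[of "\<lambda>X. cond_oracle q X"]) (rule count_meas_cond_oracle)

lemma count_meas_map_coord: "count_meas borel (\<lambda>X :: nat \<Rightarrow> nat \<Rightarrow> bool. map (X j) L)"
  by (rule count_meas_map) (rule count_meas_coord)

lemma count_meas_forces: "count_meas borel (\<lambda>X. forces T p q X)"
  unfolding forces_def converges_to_def to_bits_def
  by (intro count_meas_disj count_meas_ex count_meas_all count_meas_imp count_meas_conj count_meas_not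
      count_meas_const count_meas_eq count_meas_run_cond_oracle count_meas_map_coord)

lemma count_meas_meet: "count_meas borel (\<lambda>X. meet T p q X)"
  unfolding meet_def
proof (intro count_meas_if count_meas_ex count_meas_conj count_meas_const count_meas_forces)
  have "count_meas borel (\<lambda>X. LEAST i. cond_ext q (from_nat i) \<and> forces T p (from_nat i) X)"
    by (rule measurable_Least) (intro count_meas_conj count_meas_const count_meas_forces)
  then show "count_meas borel (\<lambda>X. from_nat (LEAST i. cond_ext q (from_nat i) \<and> forces T p (from_nat i) X))"
    by (rule count_meas_comp)
qed

lemma count_meas_stage: "count_meas borel (\<lambda>X. stage T X e)"
proof (induction e)
  case 0 then show ?case by (simp add: count_meas_const)
next
  case (Suc e)
  have "count_meas borel (\<lambda>X. (\<lambda>q X. meet T (from_nat e) (commit q) X) (stage T X e) X)"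
    by (rule count_meas_app[OF _ Suc]) (rule count_meas_meet)
  then show ?case by (simp add: stage.simps(2))
qed

lemma count_meas_hjoin: "count_meas borel (\<lambda>X. hjoin T X i)"
proof -
  define F where "F q X = (if nsnd i < length (stems q ! nfst i) then stems q ! nfst i ! nsnd i
    else X (nfst i) (nsnd i))" for q :: cond and X :: "nat \<Rightarrow> nat \<Rightarrow> bool"
  have "count_meas borel (F q)" for q
    unfolding F_def
    by (cases "nsnd i < length (stems q ! nfst i)") (simp_all add: count_meas_const count_meas_coord)
  then have "count_meas borel (\<lambda>X. F (stage T X (Suc (nfst i))) X)"
    by (rule count_meas_app[OF _ count_meas_stage])
  then show ?thesis unfolding hjoin_def F_def .
qed

instance bool :: second_countable_topology
proof
  show "\<exists>B::bool set set. countable B \<and> open = generate_topology B"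
  proof (intro exI[of _ "Pow UNIV"] conjI)
    show "countable (Pow (UNIV :: bool set))" by simp
    show "open = generate_topology (Pow (UNIV :: bool set))"
    proof (intro ext iffI)
      fix S :: "bool set"
      show "generate_topology (Pow UNIV) S" by (rule generate_topology.Basis) simp
    next
      fix S :: "bool set" assume "generate_topology (Pow UNIV) S"
      show "open S" by (rule open_discrete)
    qed
  qed
qed

lemma hjoin_borel: "hjoin T \<in> borel_measurable borel"
proof -
  have "(\<lambda>X. hjoin T X i) \<in> borel_measurable borel" for i
    using count_meas_hjoin[of T i] measurable_cong_sets[OF refl sets_borel_eq_count_space] by blast
  then show ?thesis by (rule measurable_coordinatewise_then_product)
qed

theorem lemma2p7:
  fixes T :: "bool list set"
  assumes "perfect_tree T"
    and "turing_independent (paths T)"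
  shows "\<exists>h :: (nat \<Rightarrow> nat \<Rightarrow> bool) \<Rightarrow> (nat \<Rightarrow> bool).
           h \<in> borel_measurable borel \<and>
           (\<forall>xs. (\<forall>n. xs n \<in> paths T) \<longrightarrow>
                 (\<forall>n. turing_le (xs n) (h xs)) \<and>
                 (\<forall>y \<in> paths T. y \<notin> range xs \<longrightarrow> \<not> turing_le y (h xs)))"
proof (intro exI[of _ "hjoin T"] conjI allI impI ballI)
  show "hjoin T \<in> borel_measurable borel" by (rule hjoin_borel)
next
  fix xs :: "nat \<Rightarrow> nat \<Rightarrow> bool" and n
  show "turing_le (xs n) (hjoin T xs)" by (rule turing_le_hjoin)
next
  fix xs :: "nat \<Rightarrow> nat \<Rightarrow> bool" and y
  assume "\<forall>n. xs n \<in> paths T" "y \<in> paths T" "y \<notin> range xs"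
  then show "\<not> turing_le y (hjoin T xs)" by (rule not_turing_le_hjoin[OF assms(2)])
qed

end
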